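(* Let $T>0$ and let $E,B:[0,T]\times\mathbb R^3\to\mathbb R^3$ satisfy $\sup_{t\in[0,T]}\|(E,B)(t)\|_{W^{1,\infty}(\mathbb R^3)}\le C_0$ with $C_0$ independent of $\mathfrak c$ and $\varepsilon$. For $(t,x,p)$ let $(X(\tau),P(\tau))=(X(\tau;t,x,p),P(\tau;t,x,p))$ solve $$\frac{dX}{d\tau}=\hat P(\tau),\qquad \frac{dP}{d\tau}=-E(\tau,X(\tau))-\frac{P(\tau)}{P^0(\tau)}\times B(\tau,X(\tau)),\qquad X(t)=x,\ P(t)=p.$$ Then there exists a small constant $\bar T\in[0,T]$, independent of $\mathfrak c$ and $\varepsilon$, such that for $0\le\tau\le t\le\bar T$, $$\frac{\mathfrak c^5}{2(p^0)^5}|t-\tau|^3\lesssim\Big|\det\Big(\frac{\partial X(\tau)}{\partial p}\Big)\Big|\lesssim\frac{2\mathfrak c^5}{(p^0)^5}|t-\tau|^3.$$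
   Context: $\mathfrak c\ge1$ is the speed of light, $\varepsilon\in(0,1)$ a parameter; for $P\in\mathbb R^3$, $P^0=\sqrt{\mathfrak c^2+|P|^2}$ and $\hat P=\mathfrak cP/P^0$; $p^0=\sqrt{\mathfrak c^2+|p|^2}$. *)

theory Defs
  imports "HOL-Analysis.Analysis"
begin

definition pzero :: "real \<Rightarrow> real^3 \<Rightarrow> real" where
  "pzero c P = sqrt (c\<^sup>2 + (norm P)\<^sup>2)"

definition phat :: "real \<Rightarrow> real^3 \<Rightarrow> real^3" where
  "phat c P = (c / pzero c P) *\<^sub>R P"

definition W1inf_field ::
  "real \<Rightarrow> real \<Rightarrow> (real \<Rightarrow> real^3 \<Rightarrow> real^3) \<Rightarrow> (real \<Rightarrow> real^3 \<Rightarrow> real^3^3) \<Rightarrow> bool" where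
  "W1inf_field T C0 F DF \<longleftrightarrow>
     continuous_on ({0..T} \<times> UNIV) (\<lambda>(t, x). F t x) \<and>
     continuous_on ({0..T} \<times> UNIV) (\<lambda>(t, x). DF t x) \<and>
     (\<forall>t\<in>{0..T}. \<forall>x. (F t has_derivative (\<lambda>h. DF t x *v h)) (at x)) \<and>
     (\<forall>t\<in>{0..T}. \<forall>x. norm (F t x) + norm (DF t x) \<le> C0)"

definition is_characteristic_flow ::
  "real \<Rightarrow> real \<Rightarrow> (real \<Rightarrow> real^3 \<Rightarrow> real^3) \<Rightarrow> (real \<Rightarrow> real^3 \<Rightarrow> real^3)
   \<Rightarrow> (real \<Rightarrow> real^3 \<Rightarrow> real^3 \<Rightarrow> real \<Rightarrow> real^3)
   \<Rightarrow> (real \<Rightarrow> real^3 \<Rightarrow> real^3 \<Rightarrow> real \<Rightarrow> real^3) \<Rightarrow> bool" where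
  "is_characteristic_flow c T E B X P \<longleftrightarrow>
     (\<forall>t\<in>{0..T}. \<forall>x p.
        X t x p t = x \<and> P t x p t = p \<and>
        (\<forall>s\<in>{0..T}.
           (X t x p has_vector_derivative phat c (P t x p s)) (at s within {0..T}) \<and>
           (P t x p has_vector_derivative
              (- E s (X t x p s)
               - cross3 ((1 / pzero c (P t x p s)) *\<^sub>R P t x p s) (B s (X t x p s))))
             (at s within {0..T})))"

end

(* The Jacobian dX(tau)/dp is the X-component of the solution of the linearised characteristic
   system, a backward integral equation with Lipschitz constant O(C0 + 1); on a time window of length
   O(1/(C0 + 1)) a bootstrap argument makes it the derivative of the flow. On such a window the
   momentum stays within 1/300 of p, so after normalising by R = (dphat c p)^(-1/2) the velocity
   Jacobian along the characteristic is within 1/50 of the identity. In these coordinates the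
   linearised system is a perturbation of y' = z, z' = 0, so every entry of R (dX/dp) R differs from
   that of -(t - tau) Id by at most (t - tau)/20. Hence |det (dX/dp)| is (t - tau)^3 det(R)^(-2)
   = (t - tau)^3 (c/p0)^5 up to a factor 2. *)

theory Submission
  imports Defs
begin

section \<open>Relativistic velocity and its Jacobian\<close>

lemma pzero_sq: "(pzero c P)\<^sup>2 = c\<^sup>2 + (norm P)\<^sup>2"
  unfolding pzero_def by simp

lemma pzero_ge: "c \<ge> 0 \<Longrightarrow> c \<le> pzero c P"
  unfolding pzero_def by (simp add: real_le_rsqrt)

lemma norm_le_pzero: "norm P \<le> pzero c P"
  unfolding pzero_def by (simp add: real_le_rsqrt)

lemma pzero_pos: "c > 0 \<Longrightarrow> pzero c P > 0"
  using pzero_ge[of c P] by linarith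

lemma inner_self_eq_pzero: "P \<bullet> P = (pzero c P - c) * (pzero c P + c)"
  unfolding dot_square_norm using pzero_sq[of c P] by (simp add: algebra_simps power2_eq_square)

lemma pzero_lipschitz: "\<bar>pzero c P - pzero c Q\<bar> \<le> norm (P - Q)"
proof -
  have "pzero c R = norm (c, R)" for R
    unfolding pzero_def norm_Pair by simp
  moreover have "\<bar>norm (c, P) - norm (c, Q)\<bar> \<le> norm ((c, P) - (c, Q))"
    by (rule norm_triangle_ineq3)
  ultimately show ?thesis
    by (simp add: norm_Pair)
qed

lemma norm_phat_le: "c > 0 \<Longrightarrow> norm (phat c P) \<le> c"
  using norm_le_pzero[of P c] pzero_pos[of c P]
  by (simp add: phat_def divide_le_eq mult.commute mult_left_mono)

lemma norm_cross3_le: "norm (cross3 x y) \<le> norm x * norm y"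
proof -
  have "(norm (cross3 x y))\<^sup>2 \<le> (norm x * norm y)\<^sup>2"
    using norm_cross_dot[of x y] zero_le_power2[of "x \<bullet> y"] by linarith
  then show ?thesis
    by (rule power2_le_imp_le) simp
qed

lemma norm_scaled_cross_phat_le:
  assumes "c > 0"
  shows "norm ((1 / c) *\<^sub>R cross3 (phat c P) w) \<le> norm w"
proof -
  have "norm (cross3 (phat c P) w) \<le> c * norm w"
    using norm_cross3_le[of "phat c P" w] norm_phat_le[OF assms, of P]
    by (smt (verit) mult_right_mono norm_ge_zero)
  then show ?thesis
    using assms by (simp add: divide_le_eq mult.commute)
qed

(* Radial maps of p act by A on the plane orthogonal to p and by A + B |p|^2 on p. *)
definition radial_map :: "real \<Rightarrow> real \<Rightarrow> real^3 \<Rightarrow> real^3 \<Rightarrow> real^3" where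
  "radial_map A B p w = A *\<^sub>R w + (B * (p \<bullet> w)) *\<^sub>R p"

lemma bounded_linear_radial_map: "bounded_linear (radial_map A B p)"
proof -
  have "bounded_linear (\<lambda>w. A *\<^sub>R w + (p \<bullet> w) *\<^sub>R (B *\<^sub>R p))"
    by (intro bounded_linear_intros)
  then show ?thesis
    unfolding radial_map_def[abs_def] by (simp add: mult.commute)
qed

lemma linear_radial_map: "linear (radial_map A B p)"
  using bounded_linear_radial_map bounded_linear.linear by blast

lemma radial_map_compose:
  "radial_map A1 B1 p (radial_map A2 B2 p w) =
     radial_map (A1 * A2) (A1 * B2 + B1 * A2 + B1 * B2 * (p \<bullet> p)) p w"
  unfolding radial_map_def
  by (simp add: inner_add_right scaleR_add_right scaleR_add_left algebra_simps)

lemma radial_map_compose_eq_self: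
  assumes "A1 * A2 = 1" "(A1 + B1 * (p \<bullet> p)) * (A2 + B2 * (p \<bullet> p)) = 1"
  shows "radial_map A1 B1 p (radial_map A2 B2 p w) = w"
proof -
  have "(A1 * B2 + B1 * A2 + B1 * B2 * (p \<bullet> p)) * (p \<bullet> p) = 0"
    using assms by (simp add: algebra_simps)
  then have "A1 * B2 + B1 * A2 + B1 * B2 * (p \<bullet> p) = 0 \<or> p = 0"
    by simp
  then show ?thesis
    unfolding radial_map_compose using assms(1) by (auto simp: radial_map_def)
qed

lemma radial_map_compose3_eq_self:
  assumes "A1 * A2 * A3 = 1"
    "(A1 + B1 * (p \<bullet> p)) * (A2 + B2 * (p \<bullet> p)) * (A3 + B3 * (p \<bullet> p)) = 1"
  shows "radial_map A1 B1 p (radial_map A2 B2 p (radial_map A3 B3 p w)) = w"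
proof -
  have "A2 * A3 + (A2 * B3 + B2 * A3 + B2 * B3 * (p \<bullet> p)) * (p \<bullet> p)
      = (A2 + B2 * (p \<bullet> p)) * (A3 + B3 * (p \<bullet> p))"
    by (simp add: algebra_simps)
  then show ?thesis
    unfolding radial_map_compose[of A2 B2 p A3 B3 w]
    by (intro radial_map_compose_eq_self) (use assms in \<open>simp_all add: mult.assoc\<close>)
qed

lemma radial_map_inner_commute: "radial_map A B p u \<bullet> v = u \<bullet> radial_map A B p v"
  unfolding radial_map_def by (simp add: inner_add_left inner_add_right inner_commute)

lemma norm_radial_map_le:
  assumes "B \<le> 0" "0 \<le> 2 * A + B * (p \<bullet> p)"
  shows "norm (radial_map A B p w) \<le> \<bar>A\<bar> * norm w"
proof -
  have "(norm (radial_map A B p w))\<^sup>2 = A\<^sup>2 * (norm w)\<^sup>2 + B * (p \<bullet> w)\<^sup>2 * (2 * A + B * (p \<bullet> p))"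
    unfolding radial_map_def power2_norm_eq_inner
    by (simp add: inner_add_left inner_add_right inner_commute power2_eq_square algebra_simps)
  also have "\<dots> \<le> (\<bar>A\<bar> * norm w)\<^sup>2"
    using assms by (simp add: power_mult_distrib mult_nonpos_nonneg)
  finally show ?thesis
    by (rule power2_le_imp_le) simp
qed

lemma matrix_radial_map:
  "matrix (radial_map A B p) = (\<chi> i j. A * (if i = j then 1 else 0) + B * p $ j * p $ i)"
proof -
  have "axis j 1 $ i = (if i = j then 1 else (0::real))" for i j :: 3
    by (simp add: axis_def)
  then show ?thesis
    unfolding matrix_def radial_map_def by (simp add: vec_eq_iff inner_axis algebra_simps)
qed

lemma det_radial_map: "det (matrix (radial_map A B p)) = A\<^sup>2 * (A + B * (p \<bullet> p))"
  unfolding matrix_radial_map det_3 inner_vec_def sum_3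
  by (simp add: algebra_simps power2_eq_square)

definition dphat :: "real \<Rightarrow> real^3 \<Rightarrow> real^3 \<Rightarrow> real^3" where
  "dphat c P = radial_map (c / pzero c P) (- c / pzero c P ^ 3) P"

lemma linear_dphat: "linear (dphat c P)"
  unfolding dphat_def by (rule linear_radial_map)

lemma matrix_dphat_mult: "matrix (dphat c P) *v h = dphat c P h"
  using matrix_vector_mul(2)[OF linear_dphat, of c P] by metis

lemma dphat_inner_commute: "dphat c P u \<bullet> v = u \<bullet> dphat c P v"
  unfolding dphat_def by (rule radial_map_inner_commute)

lemma has_derivative_phat:
  assumes "c > 0"
  shows "(phat c has_derivative dphat c P) (at P)"
proof -
  have pos: "pzero c P > 0"
    using pzero_pos[OF assms] .
  have "((\<lambda>Q. c\<^sup>2 + (norm Q)\<^sup>2) has_derivative (\<lambda>d. 2 * (P \<bullet> d))) (at P)"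
    by (auto intro!: derivative_eq_intros simp: power2_norm_eq_inner fun_eq_iff inner_commute)
  then have "(pzero c has_derivative (\<lambda>d. (P \<bullet> d) / pzero c P)) (at P)"
    using pos unfolding pzero_def
    by (auto intro!: derivative_eq_intros simp: fun_eq_iff field_simps)
  then have "((\<lambda>Q. c / pzero c Q) has_derivative (\<lambda>d. - (c * (P \<bullet> d) / pzero c P ^ 3))) (at P)"
    using pos by (auto intro!: derivative_eq_intros simp: field_simps power2_eq_square power3_eq_cube)
  from has_derivative_scaleR[OF this has_derivative_ident]
  show ?thesis
    unfolding phat_def[abs_def] dphat_def radial_map_def by (simp add: algebra_simps)
qed

lemma norm_dphat_le:
  assumes "c > 0"
  shows "norm (dphat c P d) \<le> norm d"
proof -
  define a where "a = pzero c P"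
  have a: "a > 0" "c \<le> a" "P \<bullet> P = (a - c) * (a + c)"
    using pzero_pos[OF assms] pzero_ge[of c P] inner_self_eq_pzero[of P c] assms
    by (auto simp: a_def)
  have "P \<bullet> P = a * a - c * c"
    using a(3) by (simp add: algebra_simps)
  then have "P \<bullet> P \<le> 2 * (a * a)"
    using zero_le_square[of a] zero_le_square[of c] by linarith
  moreover have "2 * (c / a) + - c / a ^ 3 * (P \<bullet> P) = c / a ^ 3 * (2 * (a * a) - P \<bullet> P)"
    using a(1) by (simp add: a(2) field_simps power3_eq_cube)
  ultimately have "0 \<le> 2 * (c / a) + - c / a ^ 3 * (P \<bullet> P)"
    using a assms by simp
  then have "norm (dphat c P d) \<le> \<bar>c / a\<bar> * norm d"
    unfolding dphat_def a_def[symmetric] using a assms by (intro norm_radial_map_le) auto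
  also have "\<dots> \<le> norm d"
    by (rule mult_left_le_one_le) (use a assms in auto)
  finally show ?thesis .
qed

lemma phat_lipschitz:
  assumes "c > 0"
  shows "norm (phat c P - phat c Q) \<le> norm (P - Q)"
proof -
  have "onorm (dphat c R) \<le> 1" for R
    by (rule onorm_le) (use norm_dphat_le[OF assms] in simp)
  then show ?thesis
    using differentiable_bound[of UNIV "phat c" "dphat c" 1 P Q] has_derivative_phat[OF assms]
    by (auto intro: has_derivative_at_withinI)
qed

lemma inner_dphat_self:
  assumes "c > 0"
  shows "dphat c P u \<bullet> u = c * ((c * norm u)\<^sup>2 + (norm (cross3 P u))\<^sup>2) / pzero c P ^ 3"
proof -
  define a where "a = pzero c P"
  have a: "a > 0" "a\<^sup>2 = c\<^sup>2 + (norm P)\<^sup>2"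
    using pzero_pos[OF assms] pzero_sq by (auto simp: a_def)
  have "dphat c P u \<bullet> u = c / a * (u \<bullet> u) - c / a ^ 3 * (P \<bullet> u)\<^sup>2"
    unfolding dphat_def radial_map_def a_def[symmetric]
    by (simp add: inner_diff_left inner_commute[of P u] power2_eq_square)
  also have "\<dots> = c * (a\<^sup>2 * (norm u)\<^sup>2 - (P \<bullet> u)\<^sup>2) / a ^ 3"
    using a(1) by (simp add: field_simps power2_eq_square power3_eq_cube dot_square_norm)
  also have "a\<^sup>2 * (norm u)\<^sup>2 - (P \<bullet> u)\<^sup>2 = (c * norm u)\<^sup>2 + (norm (cross3 P u))\<^sup>2"
    using norm_cross_dot[of P u] unfolding a(2) by (simp add: algebra_simps power_mult_distrib)
  finally show ?thesis
    unfolding a_def .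
qed

lemma continuous_on_phat: "c > 0 \<Longrightarrow> continuous_on S f \<Longrightarrow> continuous_on S (\<lambda>r. phat c (f r))"
  unfolding phat_def pzero_def by (intro continuous_intros) (auto simp: add_pos_nonneg)

lemma continuous_on_dphat:
  "c > 0 \<Longrightarrow> continuous_on S f \<Longrightarrow> continuous_on S g \<Longrightarrow> continuous_on S (\<lambda>r. dphat c (f r) (g r))"
  unfolding dphat_def radial_map_def pzero_def by (intro continuous_intros) (auto simp: add_pos_nonneg)

lemma continuous_on_matrix_dphat:
  "c > 0 \<Longrightarrow> continuous_on S f \<Longrightarrow> continuous_on S (\<lambda>r. matrix (dphat c (f r)))"
  unfolding matrix_def dphat_def radial_map_def pzero_def
  by (intro continuous_intros) (auto simp: add_pos_nonneg)

section \<open>Normalising the Jacobian at the initial momentum\<close>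

(* dphat c p acts by c/p0 on the plane orthogonal to p and by (c/p0)^3 on p; dphat_isqrt c p and
   dphat_sqrt c p are its inverse square root and square root, with factors (p0/c)^(1/2), (p0/c)^(3/2)
   resp. (c/p0)^(1/2), (c/p0)^(3/2). *)
definition dphat_isqrt :: "real \<Rightarrow> real^3 \<Rightarrow> real^3 \<Rightarrow> real^3" where
  "dphat_isqrt c p =
     radial_map (sqrt (pzero c p / c)) (sqrt (pzero c p / c) / (c * (pzero c p + c))) p"

definition dphat_sqrt :: "real \<Rightarrow> real^3 \<Rightarrow> real^3 \<Rightarrow> real^3" where
  "dphat_sqrt c p =
     radial_map (sqrt (c / pzero c p)) (- sqrt (c / pzero c p) / (pzero c p * (pzero c p + c))) p"

lemma bounded_linear_dphat_isqrt: "bounded_linear (dphat_isqrt c p)"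
  unfolding dphat_isqrt_def by (rule bounded_linear_radial_map)

lemma bounded_linear_dphat_sqrt: "bounded_linear (dphat_sqrt c p)"
  unfolding dphat_sqrt_def by (rule bounded_linear_radial_map)

lemma dphat_sqrt_isqrt:
  assumes "c > 0"
  shows "dphat_sqrt c p (dphat_isqrt c p w) = w"
proof -
  define a where "a = pzero c p"
  define e where "e = a + c"
  have a: "a > 0" "e > 0" "p \<bullet> p = (a - c) * e"
    using pzero_pos[OF assms, of p] inner_self_eq_pzero[of p c] assms by (auto simp: a_def e_def)
  have "sqrt (c / a) * sqrt (a / c) = 1"
    using a assms by (simp add: real_sqrt_mult[symmetric])
  then show ?thesis
    unfolding dphat_sqrt_def dphat_isqrt_def a_def[symmetric] e_def[symmetric]
    by (intro radial_map_compose_eq_self) (use a(1,2) assms in \<open>auto simp: a(3) field_simps\<close>)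
qed

lemma dphat_isqrt_sqrt:
  assumes "c > 0"
  shows "dphat_isqrt c p (dphat_sqrt c p w) = w"
proof -
  define a where "a = pzero c p"
  define e where "e = a + c"
  have a: "a > 0" "e > 0" "p \<bullet> p = (a - c) * e"
    using pzero_pos[OF assms, of p] inner_self_eq_pzero[of p c] assms by (auto simp: a_def e_def)
  have "sqrt (a / c) * sqrt (c / a) = 1"
    using a assms by (simp add: real_sqrt_mult[symmetric])
  then show ?thesis
    unfolding dphat_sqrt_def dphat_isqrt_def a_def[symmetric] e_def[symmetric]
    by (intro radial_map_compose_eq_self) (use a(1,2) assms in \<open>auto simp: a(3) field_simps\<close>)
qed

lemma dphat_isqrt_dphat_isqrt:
  assumes "c > 0"
  shows "dphat_isqrt c p (dphat c p (dphat_isqrt c p w)) = w"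
proof -
  define a where "a = pzero c p"
  define e where "e = a + c"
  define k where "k = sqrt (a / c)"
  have a: "a > 0" "e > 0" "p \<bullet> p = (a - c) * e" "e = a + c"
    using pzero_pos[OF assms, of p] inner_self_eq_pzero[of p c] assms by (auto simp: a_def e_def)
  have k: "k * k = a / c"
    using a assms by (simp add: k_def)
  have "k * (c / a) * k = (k * k) * (c / a)"
    by simp
  also have "\<dots> = 1"
    unfolding k using a(1) assms by simp
  finally have on_plane: "k * (c / a) * k = 1" .
  have "(k * a / c) * (c / a) ^ 3 * (k * a / c) = (k * k) * (c / a)"
    using a(1) assms by (simp add: field_simps power3_eq_cube)
  also have "\<dots> = 1"
    unfolding k using a(1) assms by simp
  finally have on_p: "(k * a / c) * (c / a) ^ 3 * (k * a / c) = 1" .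
  have eig_isqrt: "k + k / (c * e) * (p \<bullet> p) = k * a / c"
    using a(1,2) assms by (simp add: a(3) field_simps)
  have eig_dphat: "c / a + - c / a ^ 3 * (p \<bullet> p) = (c / a) ^ 3"
    using a(1,2) by (simp add: a(3,4) field_simps power3_eq_cube)
  show ?thesis
    unfolding dphat_def dphat_isqrt_def a_def[symmetric] e_def[symmetric] k_def[symmetric]
    by (intro radial_map_compose3_eq_self on_plane) (simp only: eig_isqrt eig_dphat on_p)
qed

lemma norm_dphat_sqrt_le:
  assumes "c > 0"
  shows "norm (dphat_sqrt c p w) \<le> norm w"
proof -
  define a where "a = pzero c p"
  define e where "e = a + c"
  define s where "s = sqrt (c / a)"
  have a: "a > 0" "c \<le> a" "e > 0" "p \<bullet> p = (a - c) * e"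
    using pzero_pos[OF assms, of p] pzero_ge[of c p] inner_self_eq_pzero[of p c] assms
    by (auto simp: a_def e_def)
  have s: "0 \<le> s" "s \<le> 1"
    using a assms by (auto simp: s_def)
  have "2 * s + - s / (a * e) * (p \<bullet> p) = s * e / a"
    using a(1,3) by (simp add: a(4) field_simps) (simp add: e_def algebra_simps)
  also have "\<dots> \<ge> 0"
    using a s assms by simp
  finally have "norm (dphat_sqrt c p w) \<le> \<bar>s\<bar> * norm w"
    unfolding dphat_sqrt_def a_def[symmetric] e_def[symmetric] s_def[symmetric]
    using a s by (intro norm_radial_map_le) auto
  also have "\<dots> \<le> norm w"
    using s by (simp add: mult_left_le_one_le)
  finally show ?thesis .
qed

lemma det_dphat_isqrt_sq:
  assumes "c > 0"
  shows "(det (matrix (dphat_isqrt c p)))\<^sup>2 = (pzero c p / c) ^ 5"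
proof -
  define a where "a = pzero c p"
  define e where "e = a + c"
  define k where "k = sqrt (a / c)"
  have a: "a > 0" "e > 0" "p \<bullet> p = (a - c) * e"
    using pzero_pos[OF assms, of p] inner_self_eq_pzero[of p c] assms by (auto simp: a_def e_def)
  have k: "k\<^sup>2 = a / c"
    using a assms by (simp add: k_def)
  have "det (matrix (dphat_isqrt c p)) = k\<^sup>2 * (k * a / c)"
    unfolding dphat_isqrt_def det_radial_map a_def[symmetric] e_def[symmetric] k_def[symmetric]
    using a(1,2) assms by (simp add: a(3) field_simps)
  then have "(det (matrix (dphat_isqrt c p)))\<^sup>2 = (k\<^sup>2) ^ 3 * (a / c)\<^sup>2"
    by (simp add: power2_eq_square power3_eq_cube)
  also have "\<dots> = (a / c) ^ 5"
    unfolding k by (simp add: power_add[symmetric])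
  finally show ?thesis
    unfolding a_def .
qed

lemma norm_le_of_selfadjoint_quadratic_bound:
  fixes f :: "'a::real_inner \<Rightarrow> 'a"
  assumes lin: "linear f" and sym: "\<And>u v. f u \<bullet> v = u \<bullet> f v"
    and quad: "\<And>u. \<bar>u \<bullet> f u\<bar> \<le> \<eta> * (norm u)\<^sup>2"
  shows "norm (f u) \<le> \<eta> * norm u"
proof (cases "f u = 0")
  case True
  have "0 \<le> \<eta> * (norm u)\<^sup>2"
    using quad[of u] by linarith
  then show ?thesis
    using True by (cases "u = 0") (auto simp: zero_le_mult_iff)
next
  case False
  define v where "v = (norm u / norm (f u)) *\<^sub>R f u"
  have "u \<noteq> 0"
    using False linear_0[OF lin] by auto
  have nv: "norm v = norm u"
    using False by (simp add: v_def)
  have fuv: "f u \<bullet> v = norm u * norm (f u)"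
    using False by (simp add: v_def power2_norm_eq_inner[symmetric] power2_eq_square)
  have "4 * (f u \<bullet> v) = (u + v) \<bullet> f (u + v) - (u - v) \<bullet> f (u - v)"
    using sym[of u v] sym[of v u] linear_add[OF lin] linear_diff[OF lin]
    by (simp add: inner_add_left inner_add_right inner_diff_left inner_diff_right inner_commute)
  also have "\<dots> \<le> \<eta> * (norm (u + v))\<^sup>2 + \<eta> * (norm (u - v))\<^sup>2"
    using quad[of "u + v"] quad[of "u - v"] by linarith
  also have "\<dots> = \<eta> * (2 * (norm u)\<^sup>2 + 2 * (norm v)\<^sup>2)"
    by (simp add: power2_norm_eq_inner inner_add_left inner_add_right inner_diff_left
        inner_diff_right inner_commute algebra_simps)
  finally have "norm u * norm (f u) \<le> \<eta> * (norm u)\<^sup>2"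
    using fuv nv by simp
  then show ?thesis
    using \<open>u \<noteq> 0\<close> by (simp add: power2_eq_square mult.commute mult.left_commute)
qed

lemma small_perturbation_ratios:
  fixes d :: real
  assumes "0 \<le> d" "d \<le> 1/300"
  shows "(1 + d)\<^sup>2 / (1 - d) ^ 3 \<le> 51 / 50" and "49 / 50 \<le> (1 - d)\<^sup>2 / (1 + d) ^ 3"
proof -
  have "(1 + d)\<^sup>2 \<le> (301 / 300)\<^sup>2" "(299 / 300) ^ 3 \<le> (1 - d) ^ 3"
    "(1 + d) ^ 3 \<le> (301 / 300) ^ 3" "(299 / 300)\<^sup>2 \<le> (1 - d)\<^sup>2"
    using assms by (intro power_mono; simp)+
  then have "(1 + d)\<^sup>2 \<le> 51 / 50 * (1 - d) ^ 3" "49 / 50 * (1 + d) ^ 3 \<le> (1 - d)\<^sup>2"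
    by (simp_all add: power2_eq_square power3_eq_cube)
  then show "(1 + d)\<^sup>2 / (1 - d) ^ 3 \<le> 51 / 50" "49 / 50 \<le> (1 - d)\<^sup>2 / (1 + d) ^ 3"
    using assms by (simp_all add: divide_le_eq le_divide_eq)
qed

lemma cube_ratio_perturbation:
  fixes n n' a A d :: real
  assumes "0 \<le> n" "\<bar>n' - n\<bar> \<le> d * n" "a > 0" "\<bar>A - a\<bar> \<le> d * a" "0 \<le> d" "d \<le> 1/300"
  shows "\<bar>n'\<^sup>2 / A ^ 3 - n\<^sup>2 / a ^ 3\<bar> \<le> (n\<^sup>2 / a ^ 3) / 50"
proof -
  define t where "t = n\<^sup>2 / a ^ 3"
  have t: "t \<ge> 0"
    using assms by (simp add: t_def)
  have n': "(1 - d) * n \<le> n'" "n' \<le> (1 + d) * n" and A: "(1 - d) * a \<le> A" "A \<le> (1 + d) * a"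
    using assms by (auto simp: abs_le_iff algebra_simps)
  have d: "0 < 1 - d"
    using assms by simp
  have "0 \<le> n'" "0 < A"
    using n'(1) A(1) d assms(1,3) by (smt (verit) mult_nonneg_nonneg mult_pos_pos)+
  have "n'\<^sup>2 \<le> ((1 + d) * n)\<^sup>2" "((1 - d) * a) ^ 3 \<le> A ^ 3"
    using n' A d \<open>0 \<le> n'\<close> assms by (intro power_mono; simp)+
  then have "n'\<^sup>2 / A ^ 3 \<le> ((1 + d) * n)\<^sup>2 / ((1 - d) * a) ^ 3"
    using d assms by (intro frac_le) auto
  also have "\<dots> = t * ((1 + d)\<^sup>2 / (1 - d) ^ 3)"
    by (simp add: t_def power_mult_distrib ac_simps)
  also have "\<dots> \<le> t * (51 / 50)"
    using small_perturbation_ratios(1)[OF assms(5,6)] t by (rule mult_left_mono)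
  finally have upper: "n'\<^sup>2 / A ^ 3 \<le> t * (51 / 50)" .
  have "t * (49 / 50) \<le> t * ((1 - d)\<^sup>2 / (1 + d) ^ 3)"
    using small_perturbation_ratios(2)[OF assms(5,6)] t by (rule mult_left_mono)
  also have "\<dots> = ((1 - d) * n)\<^sup>2 / ((1 + d) * a) ^ 3"
    by (simp add: t_def power_mult_distrib ac_simps)
  also have "\<dots> \<le> n'\<^sup>2 / A ^ 3"
  proof -
    have "((1 - d) * n)\<^sup>2 \<le> n'\<^sup>2" "A ^ 3 \<le> ((1 + d) * a) ^ 3"
      using n' A d \<open>0 < A\<close> assms by (intro power_mono; simp)+
    then show ?thesis
      using \<open>0 < A\<close> by (intro frac_le) auto
  qed
  finally have lower: "t * (49 / 50) \<le> n'\<^sup>2 / A ^ 3" .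
  show ?thesis
    using upper lower unfolding t_def[symmetric] by linarith
qed

(* The form is c n^2 / P0^3 with n = norm (c * norm u, cross3 P u), and both n and P0 are
   1-Lipschitz in P. *)
lemma dphat_quadratic_perturbation:
  assumes c: "c \<ge> 1" and P: "norm (P - p) \<le> d" and d: "0 \<le> d" "d \<le> 1/300"
  shows "\<bar>dphat c P u \<bullet> u - dphat c p u \<bullet> u\<bar> \<le> (dphat c p u \<bullet> u) / 50"
proof -
  have c0: "c > 0"
    using c by simp
  define n where "n = norm (c * norm u, cross3 p u)"
  define n' where "n' = norm (c * norm u, cross3 P u)"
  define a where "a = pzero c p"
  define A where "A = pzero c P"
  define q' q where "q' = n'\<^sup>2 / A ^ 3" and "q = n\<^sup>2 / a ^ 3"
  have "\<bar>n' - n\<bar> \<le> norm ((c * norm u, cross3 P u) - (c * norm u, cross3 p u))"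
    unfolding n_def n'_def by (rule norm_triangle_ineq3)
  also have "\<dots> = norm (cross3 (P - p) u)"
    by (simp add: norm_Pair Cross3.left_diff_distrib)
  also have "\<dots> \<le> d * norm u"
    using norm_cross3_le[of "P - p" u] mult_right_mono[OF P norm_ge_zero[of u]] by linarith
  also have "\<dots> \<le> d * n"
  proof -
    have "norm u \<le> c * norm u"
      using mult_right_mono[OF c norm_ge_zero[of u]] by simp
    also have "\<dots> \<le> n"
      unfolding n_def norm_Pair using c0 by (intro real_le_rsqrt) simp
    finally show ?thesis
      using d by (simp add: mult_left_mono)
  qed
  finally have n: "\<bar>n' - n\<bar> \<le> d * n" .
  have a1: "a \<ge> 1"
    using pzero_ge[of c p] c by (simp add: a_def)
  have "\<bar>A - a\<bar> \<le> d"
    using pzero_lipschitz[of c P p] P by (simp add: a_def A_def)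
  also have "\<dots> \<le> d * a"
    using mult_left_mono[OF a1 d(1)] by simp
  finally have "\<bar>q' - q\<bar> \<le> q / 50"
    unfolding q'_def q_def using n a1 d by (intro cube_ratio_perturbation) (auto simp: n_def)
  moreover
  have "(c * norm u)\<^sup>2 + (norm (cross3 Q u))\<^sup>2 = (norm (c * norm u, cross3 Q u))\<^sup>2" for Q
    unfolding norm_Pair by simp
  then have "dphat c P u \<bullet> u = c * q'" "dphat c p u \<bullet> u = c * q"
    unfolding inner_dphat_self[OF c0] n_def n'_def a_def A_def q_def q'_def by simp_all
  moreover have "\<bar>c * q' - c * q\<bar> = c * \<bar>q' - q\<bar>"
    using c0 by (simp add: abs_mult flip: right_diff_distrib)
  ultimately show ?thesis
    using mult_left_mono[of "\<bar>q' - q\<bar>" "q / 50" c] c0 by simp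
qed

(* The normalised map is self-adjoint, so it suffices to compare quadratic forms. *)
lemma dphat_normalized_near_identity:
  assumes c: "c \<ge> 1" and P: "norm (P - p) \<le> 1/300"
  shows "norm (dphat_isqrt c p (dphat c P (dphat_isqrt c p w)) - w) \<le> norm w / 50"
proof -
  have c0: "c > 0"
    using c by simp
  define f where "f w = dphat_isqrt c p (dphat c P (dphat_isqrt c p w)) - w" for w
  have "linear (dphat_isqrt c p \<circ> dphat c P \<circ> dphat_isqrt c p)"
    unfolding dphat_isqrt_def by (intro linear_compose linear_radial_map linear_dphat)
  then have "linear f"
    unfolding f_def[abs_def] using linear_compose_sub[OF _ linear_id] by (simp add: o_def id_def)
  moreover have "f u \<bullet> v = u \<bullet> f v" for u v
    unfolding f_def dphat_isqrt_def
    by (simp only: inner_diff_left inner_diff_right radial_map_inner_commute dphat_inner_commute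
        inner_commute[of v u])
  moreover have "\<bar>u \<bullet> f u\<bar> \<le> 1/50 * (norm u)\<^sup>2" for u
  proof -
    define r where "r = dphat_isqrt c p u"
    have move: "u \<bullet> dphat_isqrt c p v = v \<bullet> r" for v
      unfolding r_def dphat_isqrt_def by (metis radial_map_inner_commute inner_commute)
    have "u \<bullet> u = u \<bullet> dphat_isqrt c p (dphat c p r)"
      using dphat_isqrt_dphat_isqrt[OF c0, of p u] by (simp only: r_def)
    then have uu: "u \<bullet> u = dphat c p r \<bullet> r"
      by (simp only: move)
    have "u \<bullet> f u = dphat c P r \<bullet> r - dphat c p r \<bullet> r"
      unfolding f_def inner_diff_right r_def[symmetric] move uu ..
    then show ?thesis
      using dphat_quadratic_perturbation[OF c P, of r] uu by (simp add: power2_norm_eq_inner)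
  qed
  ultimately show ?thesis
    using norm_le_of_selfadjoint_quadratic_bound[of f "1/50" w] by (simp add: f_def)
qed

lemma norm_dphat_le_twice_sqrt:
  assumes c: "c \<ge> 1" and P: "norm (P - p) \<le> 1/300"
  shows "norm (dphat c P w) \<le> 2 * norm (dphat_sqrt c p w)"
proof -
  have c0: "c > 0"
    using c by simp
  define u where "u = dphat_sqrt c p w"
  define v where "v = dphat_isqrt c p (dphat c P (dphat_isqrt c p u))"
  have "dphat c P w = dphat_sqrt c p v"
    by (simp add: u_def v_def dphat_isqrt_sqrt[OF c0] dphat_sqrt_isqrt[OF c0])
  then have "norm (dphat c P w) \<le> norm v"
    using norm_dphat_sqrt_le[OF c0] by metis
  also have "\<dots> \<le> 2 * norm u"
    using dphat_normalized_near_identity[OF c P, of u] norm_triangle_ineq2[of v u] norm_ge_zero[of u]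
    unfolding v_def by linarith
  finally show ?thesis
    unfolding u_def .
qed

lemma det_bounds_near_neg_scalar:
  fixes M :: "real^3^3"
  assumes d: "0 \<le> d" and near: "\<And>i j. \<bar>M $ i $ j + (if i = j then d else 0)\<bar> \<le> d / 20"
  shows "d ^ 3 / 2 \<le> \<bar>det M\<bar> \<and> \<bar>det M\<bar> \<le> 2 * d ^ 3"
proof -
  have off: "\<bar>M $ i $ j\<bar> \<le> d / 20" if "i \<noteq> j" for i j
    using near[of i j] that by simp
  have diag: "19/20 * d \<le> - M $ i $ i \<and> - M $ i $ i \<le> 21/20 * d" for i
  proof -
    have "\<bar>M $ i $ i + d\<bar> \<le> d / 20"
      using near[of i i] by simp
    then show ?thesis
      unfolding abs_le_iff by linarith
  qed
  then have diag_abs: "\<bar>M $ i $ i\<bar> \<le> 21/20 * d" for i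
    using d by (simp add: abs_le_iff) (smt (verit))
  have abs3: "\<bar>x * y * z\<bar> \<le> a * b * c"
    if "\<bar>x\<bar> \<le> a" "\<bar>y\<bar> \<le> b" "\<bar>z\<bar> \<le> c" for x y z a b c :: real
    using that unfolding abs_mult by (intro mult_mono) (auto intro: order_trans[OF abs_ge_zero])
  define y1 where "y1 = - M$1$1"
  define y2 where "y2 = - M$2$2"
  define y3 where "y3 = - M$3$3"
  define D where "D = y1 * y2 * y3"
  have y: "19/20 * d \<le> y1" "y1 \<le> 21/20 * d" "19/20 * d \<le> y2" "y2 \<le> 21/20 * d"
    "19/20 * d \<le> y3" "y3 \<le> 21/20 * d"
    unfolding y1_def y2_def y3_def using diag[of 1] diag[of 2] diag[of 3] by auto
  have "(19/20 * d) * (19/20 * d) * (19/20 * d) \<le> D"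
    unfolding D_def using y d by (intro mult_mono) auto
  moreover have "D \<le> (21/20 * d) * (21/20 * d) * (21/20 * d)"
    unfolding D_def using y d by (intro mult_mono) auto
  moreover have
    "\<bar>M$1$2 * M$2$3 * M$3$1\<bar> \<le> (d/20) * (d/20) * (d/20)"
    "\<bar>M$1$3 * M$2$1 * M$3$2\<bar> \<le> (d/20) * (d/20) * (d/20)"
    "\<bar>M$1$1 * M$2$3 * M$3$2\<bar> \<le> (21/20 * d) * (d/20) * (d/20)"
    "\<bar>M$1$2 * M$2$1 * M$3$3\<bar> \<le> (d/20) * (d/20) * (21/20 * d)"
    "\<bar>M$1$3 * M$2$2 * M$3$1\<bar> \<le> (d/20) * (21/20 * d) * (d/20)"
    by (intro abs3 off diag_abs; simp)+
  moreover have "det M = - D + M$1$2 * M$2$3 * M$3$1 + M$1$3 * M$2$1 * M$3$2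
      - M$1$1 * M$2$3 * M$3$2 - M$1$2 * M$2$1 * M$3$3 - M$1$3 * M$2$2 * M$3$1"
    unfolding det_3 D_def y1_def y2_def y3_def by simp
  ultimately have "det M \<le> - (d ^ 3 / 2)" "- (2 * d ^ 3) \<le> det M"
    using d unfolding abs_le_iff power3_eq_cube by (simp_all add: algebra_simps)
  then show ?thesis
    by (simp add: abs_if)
qed

lemma det_bounds_of_normalized_near_neg_scalar:
  fixes J :: "real^3 \<Rightarrow> real^3"
  assumes J: "linear J" and c: "c > 0" and d: "0 \<le> d"
    and near: "\<And>v. norm (dphat_isqrt c p (J (dphat_isqrt c p v)) + d *\<^sub>R v) \<le> d / 20 * norm v"
  shows "c ^ 5 / (2 * pzero c p ^ 5) * d ^ 3 \<le> \<bar>det (matrix J)\<bar>"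
    and "\<bar>det (matrix J)\<bar> \<le> 2 * c ^ 5 / pzero c p ^ 5 * d ^ 3"
proof -
  define R where "R = dphat_isqrt c p"
  have R: "linear R"
    unfolding R_def by (rule bounded_linear.linear[OF bounded_linear_dphat_isqrt])
  define M where "M = matrix (R \<circ> J \<circ> R)"
  have "M $ i $ j + (if i = j then d else 0) = (R (J (R (axis j 1))) + d *\<^sub>R axis j 1) $ i" for i j
    unfolding M_def matrix_def by (simp add: axis_def)
  then have "\<bar>M $ i $ j + (if i = j then d else 0)\<bar> \<le> d / 20" for i j
    using component_le_norm_cart[of "R (J (R (axis j 1))) + d *\<^sub>R axis j 1" i] near[of "axis j 1"]
    by (simp add: R_def)
  then have bounds: "d ^ 3 / 2 \<le> \<bar>det M\<bar>" "\<bar>det M\<bar> \<le> 2 * d ^ 3"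
    using det_bounds_near_neg_scalar[OF d] by blast+
  have Meq: "M = matrix R ** matrix J ** matrix R"
    unfolding M_def matrix_compose[OF R linear_compose[OF J R]] matrix_compose[OF J R] ..
  have "\<bar>det M\<bar> = (pzero c p / c) ^ 5 * \<bar>det (matrix J)\<bar>"
    unfolding Meq det_mul det_dphat_isqrt_sq[OF c, symmetric] R_def
    by (simp add: abs_mult power2_eq_square)
  define q where "q = (c / pzero c p) ^ 5"
  have "pzero c p > 0"
    using pzero_pos[OF c] .
  then have q: "q > 0" "\<bar>det (matrix J)\<bar> = q * \<bar>det M\<bar>"
    using c \<open>\<bar>det M\<bar> = _\<close> by (simp_all add: q_def power_divide field_simps)
  have e: "c ^ 5 / (2 * pzero c p ^ 5) * d ^ 3 = q * (d ^ 3 / 2)"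
    "2 * c ^ 5 / pzero c p ^ 5 * d ^ 3 = q * (2 * d ^ 3)"
    by (simp_all add: q_def power_divide)
  show "c ^ 5 / (2 * pzero c p ^ 5) * d ^ 3 \<le> \<bar>det (matrix J)\<bar>"
    unfolding e q(2) by (intro mult_left_mono) (use bounds q in auto)
  show "\<bar>det (matrix J)\<bar> \<le> 2 * c ^ 5 / pzero c p ^ 5 * d ^ 3"
    unfolding e q(2) by (intro mult_left_mono) (use bounds q in auto)
qed

section \<open>Backward integral equations\<close>

lemma bootstrap_le_twice:
  fixes u :: "real \<Rightarrow> real"
  assumes u: "continuous_on {a..b} u" and A: "0 \<le> A" and k: "0 \<le> k" "k \<le> 1/2"
    and step: "\<And>M. (\<And>r. r \<in> {a..b} \<Longrightarrow> u r \<le> M) \<Longrightarrow> (\<And>s. s \<in> {a..b} \<Longrightarrow> u s \<le> A + k * M)"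
    and s: "s \<in> {a..b}"
  shows "u s \<le> 2 * A"
proof -
  obtain m where m: "m \<in> {a..b}" "\<And>r. r \<in> {a..b} \<Longrightarrow> u r \<le> u m"
    using continuous_attains_sup[OF compact_Icc _ u] s by fastforce
  have "(1 - k) * u m \<le> A"
    using step[OF m(2) m(1)] by (simp add: algebra_simps)
  moreover have "u m \<le> 2 * ((1 - k) * u m) \<or> u m < 0"
  proof (cases "u m \<ge> 0")
    case True
    have "(2 * k) * u m \<le> 1 * u m"
      using k True by (intro mult_right_mono) auto
    then show ?thesis
      by (simp add: algebra_simps)
  qed auto
  ultimately have "u m \<le> 2 * A"
    using A by linarith
  then show ?thesis
    using m(2)[OF s] by simp
qed

lemma integrable_on_tail:
  fixes g :: "real \<Rightarrow> 'a::banach"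
  shows "continuous_on {a..b} g \<Longrightarrow> s \<in> {a..b} \<Longrightarrow> g integrable_on {s..b}"
  by (rule integrable_continuous_interval) (auto intro: continuous_on_subset)

lemma norm_integral_tail_le:
  fixes g :: "real \<Rightarrow> 'a::banach"
  assumes g: "continuous_on {a..b} g" and s: "s \<in> {a..b}"
    and M: "\<And>r. r \<in> {a..b} \<Longrightarrow> norm (g r) \<le> M"
  shows "norm (integral {s..b} g) \<le> (b - a) * M"
proof -
  have "norm (integral {s..b} g) \<le> M * (b - s)"
    using s by (intro integral_bound) (auto intro: continuous_on_subset[OF g] M)
  also have "\<dots> \<le> M * (b - a)"
    using s order_trans[OF norm_ge_zero M[OF s]] by (intro mult_left_mono) auto
  finally show ?thesis
    by (simp add: mult.commute)
qed

lemma integral_fst_snd: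
  fixes f :: "real \<Rightarrow> 'a::banach \<times> 'b::banach"
  assumes "f integrable_on S"
  shows "fst (integral S f) = integral S (\<lambda>r. fst (f r))" "snd (integral S f) = integral S (\<lambda>r. snd (f r))"
  using integral_linear[OF assms bounded_linear_fst] integral_linear[OF assms bounded_linear_snd]
  by (simp_all add: o_def)

lemma bcontfun_clamped_tail_integral:
  fixes g :: "real \<Rightarrow> 'a::banach"
  assumes ab: "a \<le> b" and g: "continuous_on {a..b} g"
  shows "(\<lambda>s. h + integral {max a (min b s)..b} g) \<in> bcontfun"
proof -
  have cl: "max a (min b s) \<in> {a..b}" for s
    using ab by auto
  have "continuous_on {a..b} (\<lambda>s. integral {s..b} g)"
    by (intro indefinite_integral_continuous_1' integrable_continuous_interval g)
  moreover have "continuous_on UNIV (\<lambda>s. max a (min b s))"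
    by (intro continuous_intros)
  ultimately have "continuous_on UNIV (\<lambda>s. integral {max a (min b s)..b} g)"
    using continuous_on_compose2[of "{a..b}" _ UNIV "\<lambda>s. max a (min b s)"] cl by blast
  then have "continuous_on UNIV (\<lambda>s. h + integral {max a (min b s)..b} g)"
    by (intro continuous_intros)
  moreover have "bounded (g ` {a..b})"
    by (intro compact_imp_bounded compact_continuous_image g compact_Icc)
  then obtain K where K: "\<And>r. r \<in> {a..b} \<Longrightarrow> norm (g r) \<le> K"
    unfolding bounded_iff by blast
  then have "norm (h + integral {max a (min b s)..b} g) \<le> norm h + (b - a) * K" for s
    using norm_integral_tail_le[OF g cl K, of s] norm_triangle_ineq[of h "integral {max a (min b s)..b} g"]
    by linarith
  ultimately show ?thesis
    by (rule bcontfun_normI)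
qed

definition backward_integral_solution ::
  "real \<Rightarrow> real \<Rightarrow> (real \<Rightarrow> 'a::banach \<Rightarrow> 'a) \<Rightarrow> 'a \<Rightarrow> (real \<Rightarrow> 'a) \<Rightarrow> bool" where
  "backward_integral_solution a b F h u \<longleftrightarrow>
     continuous_on {a..b} u \<and> (\<forall>s\<in>{a..b}. u s = h + integral {s..b} (\<lambda>r. F r (u r)))"

locale lipschitz_integral_equation =
  fixes a b L :: real and F :: "real \<Rightarrow> 'a::banach \<Rightarrow> 'a"
  assumes continuous_field: "\<And>u. continuous_on {a..b} u \<Longrightarrow> continuous_on {a..b} (\<lambda>r. F r (u r))"
    and lipschitz_field: "\<And>r v w. r \<in> {a..b} \<Longrightarrow> norm (F r v - F r w) \<le> L * norm (v - w)"
    and L_nonneg: "0 \<le> L" and short: "L * (b - a) \<le> 1/2"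
begin

lemma solution_diff:
  assumes u: "backward_integral_solution a b F h u" and v: "backward_integral_solution a b F h' v"
    and s: "s \<in> {a..b}"
  shows "u s - v s = h - h' + integral {s..b} (\<lambda>r. F r (u r) - F r (v r))"
proof -
  have "(\<lambda>r. F r (u r)) integrable_on {s..b}" "(\<lambda>r. F r (v r)) integrable_on {s..b}"
    using u v s by (auto intro!: integrable_on_tail continuous_field simp: backward_integral_solution_def)
  then show ?thesis
    using u v s by (simp add: backward_integral_solution_def integral_diff)
qed

lemma solution_lipschitz:
  assumes u: "backward_integral_solution a b F h u" and v: "backward_integral_solution a b F h' v"
    and s: "s \<in> {a..b}"
  shows "norm (u s - v s) \<le> 2 * norm (h - h')"
proof -
  have cont: "continuous_on {a..b} u" "continuous_on {a..b} v"
    using u v by (auto simp: backward_integral_solution_def)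
  show ?thesis
  proof (rule bootstrap_le_twice[where u = "\<lambda>r. norm (u r - v r)" and k = "L * (b - a)", OF _ _ _ short _ s])
    show "continuous_on {a..b} (\<lambda>r. norm (u r - v r))"
      using cont by (intro continuous_intros)
    show "0 \<le> L * (b - a)"
      using L_nonneg s by simp
    fix M s'
    assume M: "\<And>r. r \<in> {a..b} \<Longrightarrow> norm (u r - v r) \<le> M" and s': "s' \<in> {a..b}"
    have "norm (integral {s'..b} (\<lambda>r. F r (u r) - F r (v r))) \<le> (b - a) * (L * M)"
    proof (rule norm_integral_tail_le[OF _ s'])
      show "continuous_on {a..b} (\<lambda>r. F r (u r) - F r (v r))"
        using cont by (intro continuous_intros continuous_field)
      show "norm (F r (u r) - F r (v r)) \<le> L * M" if "r \<in> {a..b}" for r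
        using lipschitz_field[OF that] M[OF that] L_nonneg by (meson mult_left_mono order_trans)
    qed
    moreover have "(b - a) * (L * M) = L * (b - a) * M"
      by (simp add: mult_ac)
    ultimately show "norm (u s' - v s') \<le> norm (h - h') + L * (b - a) * M"
      unfolding solution_diff[OF u v s']
      using norm_triangle_ineq[of "h - h'" "integral {s'..b} (\<lambda>r. F r (u r) - F r (v r))"] by linarith
  qed simp
qed

lemma solution_unique:
  assumes "backward_integral_solution a b F h u" "backward_integral_solution a b F h v" "s \<in> {a..b}"
  shows "u s = v s"
  using solution_lipschitz[OF assms] by simp

(* Banach's fixed point theorem for bounded continuous functions on the real line; clamping the
   lower limit of integration to [a, b] extends the integral operator off the interval. *)
lemma solution_exists:
  assumes ab: "a \<le> b"
  obtains u where "backward_integral_solution a b F h u"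
proof -
  define cl where "cl s = max a (min b s)" for s
  have cl: "cl s \<in> {a..b}" for s
    using ab by (auto simp: cl_def)
  have cl_id: "s \<in> {a..b} \<Longrightarrow> cl s = s" for s
    by (auto simp: cl_def)
  define G where "G \<phi> s = h + integral {cl s..b} (\<lambda>r. F r (apply_bcontfun \<phi> r))"
    for \<phi> :: "real \<Rightarrow>\<^sub>C 'a" and s
  have cont: "continuous_on {a..b} (\<lambda>r. F r (apply_bcontfun \<phi> r))" for \<phi>
    by (intro continuous_field continuous_on_apply_bcontfun)
  have G: "G \<phi> \<in> bcontfun" for \<phi>
    unfolding G_def cl_def by (rule bcontfun_clamped_tail_integral[OF ab cont])
  define T where "T \<phi> = Bcontfun (G \<phi>)" for \<phi>
  have T: "apply_bcontfun (T \<phi>) s = G \<phi> s" for \<phi> s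
    unfolding T_def using G by (simp add: Bcontfun_inverse)
  have contraction: "dist (T \<phi>) (T \<psi>) \<le> L * (b - a) * dist \<phi> \<psi>" for \<phi> \<psi>
  proof (rule dist_bound)
    fix s
    have "G \<phi> s - G \<psi> s = integral {cl s..b} (\<lambda>r. F r (apply_bcontfun \<phi> r) - F r (apply_bcontfun \<psi> r))"
      unfolding G_def using cl[of s] by (simp add: integral_diff integrable_on_tail[OF cont])
    also have "norm \<dots> \<le> (b - a) * (L * dist \<phi> \<psi>)"
    proof (rule norm_integral_tail_le[OF _ cl])
      show "continuous_on {a..b} (\<lambda>r. F r (apply_bcontfun \<phi> r) - F r (apply_bcontfun \<psi> r))"
        using cont by (intro continuous_intros)
      show "norm (F r (apply_bcontfun \<phi> r) - F r (apply_bcontfun \<psi> r)) \<le> L * dist \<phi> \<psi>"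
        if "r \<in> {a..b}" for r
        using lipschitz_field[OF that] dist_bounded[of \<phi> r \<psi>] L_nonneg
        by (metis dist_norm mult_left_mono order_trans)
    qed
    finally show "dist (T \<phi> s) (T \<psi> s) \<le> L * (b - a) * dist \<phi> \<psi>"
      by (simp add: T dist_norm algebra_simps)
  qed
  have "0 \<le> L * (b - a)" "L * (b - a) < 1"
    using L_nonneg ab short by auto
  then obtain \<phi> where "T \<phi> = \<phi>"
    using banach_fix_type[of "L * (b - a)" T] contraction by blast
  then have "apply_bcontfun \<phi> s = h + integral {s..b} (\<lambda>r. F r (apply_bcontfun \<phi> r))"
    if "s \<in> {a..b}" for s
    using T[of \<phi> s] cl_id[OF that] by (simp add: G_def)
  then show ?thesis
    by (intro that[of "apply_bcontfun \<phi>"]) (simp add: backward_integral_solution_def)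
qed

lemma solution_linear:
  assumes linear_field: "\<And>r. r \<in> {a..b} \<Longrightarrow> linear (F r)" and "linear \<iota>"
    and W: "\<And>k. backward_integral_solution a b F (\<iota> k) (W k)" and s: "s \<in> {a..b}"
  shows "linear (\<lambda>k. W k s)"
proof -
  have combination: "W (\<alpha> *\<^sub>R x + \<beta> *\<^sub>R y) s = \<alpha> *\<^sub>R W x s + \<beta> *\<^sub>R W y s" for \<alpha> \<beta> x y
  proof (rule solution_unique[OF W _ s])
    have cont: "continuous_on {a..b} (W k)" "continuous_on {a..b} (\<lambda>r. F r (W k r))" for k
      using W[of k] by (auto intro: continuous_field simp: backward_integral_solution_def)
    have "\<alpha> *\<^sub>R W x s' + \<beta> *\<^sub>R W y s' =
        \<iota> (\<alpha> *\<^sub>R x + \<beta> *\<^sub>R y) + integral {s'..b} (\<lambda>r. F r (\<alpha> *\<^sub>R W x r + \<beta> *\<^sub>R W y r))"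
      if s': "s' \<in> {a..b}" for s'
    proof -
      have "integral {s'..b} (\<lambda>r. F r (\<alpha> *\<^sub>R W x r + \<beta> *\<^sub>R W y r))
          = integral {s'..b} (\<lambda>r. \<alpha> *\<^sub>R F r (W x r) + \<beta> *\<^sub>R F r (W y r))"
        using s' linear_field by (intro integral_cong) (auto simp: linear_add linear_scale)
      also have "\<dots> = integral {s'..b} (\<lambda>r. \<alpha> *\<^sub>R F r (W x r)) + integral {s'..b} (\<lambda>r. \<beta> *\<^sub>R F r (W y r))"
        using s' cont by (intro integral_add integrable_on_tail[of a] continuous_intros) auto
      also have "\<dots> = \<alpha> *\<^sub>R integral {s'..b} (\<lambda>r. F r (W x r)) + \<beta> *\<^sub>R integral {s'..b} (\<lambda>r. F r (W y r))"
        by simp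
      finally show ?thesis
        using W[of x] W[of y] s' \<open>linear \<iota>\<close>
        by (simp add: backward_integral_solution_def linear_add linear_scale algebra_simps)
    qed
    then show "backward_integral_solution a b F (\<iota> (\<alpha> *\<^sub>R x + \<beta> *\<^sub>R y)) (\<lambda>r. \<alpha> *\<^sub>R W x r + \<beta> *\<^sub>R W y r)"
      using cont by (auto intro!: continuous_intros simp: backward_integral_solution_def)
  qed
  show ?thesis
    using combination[of 1 _ 1] combination[of _ _ 0 0] by (intro linearI) auto
qed

lemma solution_bounded_linear:
  assumes linear_field: "\<And>r. r \<in> {a..b} \<Longrightarrow> linear (F r)" and \<iota>: "linear \<iota>" "\<And>k. norm (\<iota> k) \<le> norm k"
    and W: "\<And>k. backward_integral_solution a b F (\<iota> k) (W k)" and s: "s \<in> {a..b}"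
  shows "bounded_linear (\<lambda>k. W k s)"
proof -
  have lin: "linear (\<lambda>k. W k s)"
    by (rule solution_linear[OF linear_field \<iota>(1) W s])
  have "norm (W k s) \<le> norm k * 2" for k
    using solution_lipschitz[OF W[of k] W[of 0] s] linear_0[OF lin] linear_0[OF \<iota>(1)] \<iota>(2)[of k]
    by simp
  then show ?thesis
    by (intro bounded_linear_intro[where K = 2]) (use linear_add[OF lin] linear_scale[OF lin] in auto)
qed

lemma solution_linearization_identity:
  assumes \<Phi>: "\<And>q. backward_integral_solution a b F (h + \<iota> q) (\<Phi> q)"
    and W: "backward_integral_solution a b (\<lambda>r. DF r (\<Phi> p r)) (\<iota> (q - p)) w" and "linear \<iota>"
    and DF_cont: "\<And>w. continuous_on {a..b} w \<Longrightarrow> continuous_on {a..b} (\<lambda>r. DF r (\<Phi> p r) (w r))"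
    and s: "s \<in> {a..b}"
  shows "\<Phi> q s - \<Phi> p s - w s = integral {s..b} (\<lambda>r. F r (\<Phi> q r) - F r (\<Phi> p r) - DF r (\<Phi> p r) (w r))"
proof -
  have cont: "continuous_on {a..b} (\<Phi> q)" "continuous_on {a..b} (\<Phi> p)" "continuous_on {a..b} w"
    using \<Phi>[of q] \<Phi>[of p] W by (auto simp: backward_integral_solution_def)
  have "\<Phi> q s - \<Phi> p s - w s = integral {s..b} (\<lambda>r. F r (\<Phi> q r) - F r (\<Phi> p r))
      - integral {s..b} (\<lambda>r. DF r (\<Phi> p r) (w r))"
    using solution_diff[OF \<Phi>[of q] \<Phi>[of p] s] W s \<open>linear \<iota>\<close>
    by (simp add: backward_integral_solution_def linear_diff)
  also have "\<dots> = integral {s..b} (\<lambda>r. F r (\<Phi> q r) - F r (\<Phi> p r) - DF r (\<Phi> p r) (w r))"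
    using s cont
    by (intro integral_diff[symmetric] integrable_on_tail[of a] continuous_intros continuous_field DF_cont)
  finally show ?thesis .
qed

lemma solution_linearization_error:
  assumes \<Phi>: "\<And>q. backward_integral_solution a b F (h + \<iota> q) (\<Phi> q)"
    and W: "backward_integral_solution a b (\<lambda>r. DF r (\<Phi> p r)) (\<iota> (q - p)) w"
    and \<iota>: "linear \<iota>" "\<And>k. norm (\<iota> k) \<le> norm k"
    and DF: "\<And>r v. r \<in> {a..b} \<Longrightarrow> linear (DF r v)"
      "\<And>r v w. r \<in> {a..b} \<Longrightarrow> norm (DF r v w) \<le> L * norm w"
    and DF_cont: "\<And>w. continuous_on {a..b} w \<Longrightarrow> continuous_on {a..b} (\<lambda>r. DF r (\<Phi> p r) (w r))"
    and \<epsilon>: "0 \<le> \<epsilon>"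
    and remainder: "\<And>r v. r \<in> {a..b} \<Longrightarrow> norm (v - \<Phi> p r) \<le> 2 * norm (q - p) \<Longrightarrow>
       norm (F r v - F r (\<Phi> p r) - DF r (\<Phi> p r) (v - \<Phi> p r)) \<le> \<epsilon> * norm (v - \<Phi> p r)"
    and s: "s \<in> {a..b}"
  shows "norm (\<Phi> q s - \<Phi> p s - w s) \<le> 4 * (b - a) * \<epsilon> * norm (q - p)"
proof -
  define e where "e r = \<Phi> q r - \<Phi> p r - w r" for r
  have "norm ((h + \<iota> q) - (h + \<iota> p)) \<le> norm (q - p)"
    using \<iota>(2)[of "q - p"] linear_diff[OF \<iota>(1), of q p] by simp
  then have close: "norm (\<Phi> q r - \<Phi> p r) \<le> 2 * norm (q - p)" if "r \<in> {a..b}" for r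
    using solution_lipschitz[OF \<Phi>[of q] \<Phi>[of p] that] by linarith
  have cont: "continuous_on {a..b} (\<Phi> q)" "continuous_on {a..b} (\<Phi> p)" "continuous_on {a..b} w"
    using \<Phi>[of q] \<Phi>[of p] W by (auto simp: backward_integral_solution_def)
  define g where "g r = F r (\<Phi> q r) - F r (\<Phi> p r) - DF r (\<Phi> p r) (w r)" for r
  have g_cont: "continuous_on {a..b} g"
    unfolding g_def using cont by (intro continuous_intros continuous_field DF_cont)
  have e_eq: "e s' = integral {s'..b} g" if "s' \<in> {a..b}" for s'
    unfolding e_def g_def
    by (rule solution_linearization_identity[where \<Phi> = \<Phi> and h = h and \<iota> = \<iota> and p = p and q = q
          and DF = DF, OF \<Phi> W \<iota>(1) DF_cont that])
  have "norm (e s) \<le> 2 * ((b - a) * (2 * \<epsilon> * norm (q - p)))"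
  proof (rule bootstrap_le_twice[where k = "L * (b - a)", OF _ _ _ short _ s])
    show "continuous_on {a..b} (\<lambda>r. norm (e r))"
      unfolding e_def using cont by (intro continuous_intros)
    show "0 \<le> (b - a) * (2 * \<epsilon> * norm (q - p))" "0 \<le> L * (b - a)"
      using s \<epsilon> L_nonneg by auto
    fix M s'
    assume M: "\<And>r. r \<in> {a..b} \<Longrightarrow> norm (e r) \<le> M" and s': "s' \<in> {a..b}"
    have "norm (g r) \<le> 2 * \<epsilon> * norm (q - p) + L * M" if r: "r \<in> {a..b}" for r
    proof -
      have "g r = (F r (\<Phi> q r) - F r (\<Phi> p r) - DF r (\<Phi> p r) (\<Phi> q r - \<Phi> p r)) + DF r (\<Phi> p r) (e r)"
        unfolding g_def e_def using DF(1)[OF r] by (simp add: linear_diff)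
      moreover have "norm (F r (\<Phi> q r) - F r (\<Phi> p r) - DF r (\<Phi> p r) (\<Phi> q r - \<Phi> p r))
          \<le> 2 * \<epsilon> * norm (q - p)"
        using order_trans[OF remainder[OF r close[OF r]] mult_left_mono[OF close[OF r] \<epsilon>]]
        by (simp add: mult_ac)
      moreover have "norm (DF r (\<Phi> p r) (e r)) \<le> L * M"
        using DF(2)[OF r] M[OF r] L_nonneg by (meson mult_left_mono order_trans)
      ultimately show ?thesis
        by (smt (verit) norm_triangle_ineq)
    qed
    then have "norm (integral {s'..b} g) \<le> (b - a) * (2 * \<epsilon> * norm (q - p) + L * M)"
      by (rule norm_integral_tail_le[OF g_cont s'])
    then show "norm (e s') \<le> (b - a) * (2 * \<epsilon> * norm (q - p)) + L * (b - a) * M"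
      unfolding e_eq[OF s'] by (simp add: algebra_simps)
  qed
  then show ?thesis
    by (simp add: e_def algebra_simps)
qed

lemma solution_has_derivative:
  fixes \<Phi> :: "'b::real_normed_vector \<Rightarrow> real \<Rightarrow> 'a" and \<iota> :: "'b \<Rightarrow> 'a"
  assumes \<Phi>: "\<And>q. backward_integral_solution a b F (h + \<iota> q) (\<Phi> q)"
    and W: "\<And>k. backward_integral_solution a b (\<lambda>r. DF r (\<Phi> p r)) (\<iota> k) (W k)"
    and \<iota>: "linear \<iota>" "\<And>k. norm (\<iota> k) \<le> norm k"
    and DF: "\<And>r v. r \<in> {a..b} \<Longrightarrow> linear (DF r v)"
      "\<And>r v w. r \<in> {a..b} \<Longrightarrow> norm (DF r v w) \<le> L * norm w"
    and DF_cont: "\<And>w. continuous_on {a..b} w \<Longrightarrow> continuous_on {a..b} (\<lambda>r. DF r (\<Phi> p r) (w r))"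
    and remainder: "\<And>\<epsilon>. \<epsilon> > 0 \<Longrightarrow> \<exists>\<delta>>0. \<forall>r\<in>{a..b}. \<forall>v. norm (v - \<Phi> p r) < \<delta> \<longrightarrow>
       norm (F r v - F r (\<Phi> p r) - DF r (\<Phi> p r) (v - \<Phi> p r)) \<le> \<epsilon> * norm (v - \<Phi> p r)"
    and s: "s \<in> {a..b}"
  shows "((\<lambda>q. \<Phi> q s) has_derivative (\<lambda>k. W k s)) (at p)"
proof -
  interpret linearized: lipschitz_integral_equation a b L "\<lambda>r. DF r (\<Phi> p r)"
  proof
    show "norm (DF r (\<Phi> p r) v - DF r (\<Phi> p r) w) \<le> L * norm (v - w)" if "r \<in> {a..b}" for r v w
      using DF[OF that] by (simp add: linear_diff[symmetric])
  qed (use DF_cont L_nonneg short in auto)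
  have bl: "bounded_linear (\<lambda>k. W k s)"
    by (rule linearized.solution_bounded_linear[OF DF(1) \<iota> W s])
  show ?thesis
    unfolding has_derivative_at_alt
  proof (intro conjI allI impI bl)
    fix e :: real
    assume e: "e > 0"
    define \<epsilon> where "\<epsilon> = e / (4 * (b - a) + 1)"
    have ba: "0 \<le> b - a"
      using s by simp
    then have \<epsilon>: "\<epsilon> > 0" "4 * (b - a) * \<epsilon> \<le> e"
      using e by (auto simp: \<epsilon>_def field_simps)
    obtain \<delta> where \<delta>: "\<delta> > 0" and rem: "\<And>r v. r \<in> {a..b} \<Longrightarrow> norm (v - \<Phi> p r) < \<delta> \<Longrightarrow>
        norm (F r v - F r (\<Phi> p r) - DF r (\<Phi> p r) (v - \<Phi> p r)) \<le> \<epsilon> * norm (v - \<Phi> p r)"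
      using remainder[OF \<epsilon>(1)] by blast
    show "\<exists>d>0. \<forall>q. norm (q - p) < d \<longrightarrow> norm (\<Phi> q s - \<Phi> p s - W (q - p) s) \<le> e * norm (q - p)"
    proof (intro exI[of _ "\<delta> / 2"] conjI allI impI)
      fix q
      assume q: "norm (q - p) < \<delta> / 2"
      have "norm (F r v - F r (\<Phi> p r) - DF r (\<Phi> p r) (v - \<Phi> p r)) \<le> \<epsilon> * norm (v - \<Phi> p r)"
        if "r \<in> {a..b}" "norm (v - \<Phi> p r) \<le> 2 * norm (q - p)" for r v
        using that q by (intro rem) auto
      then have "norm (\<Phi> q s - \<Phi> p s - W (q - p) s) \<le> 4 * (b - a) * \<epsilon> * norm (q - p)"
        using \<epsilon>(1) solution_linearization_error[where \<Phi> = \<Phi> and h = h and \<iota> = \<iota> and p = p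
            and q = q and w = "W (q - p)" and DF = DF and \<epsilon> = \<epsilon>, OF \<Phi> W \<iota> DF DF_cont _ _ s]
        by auto
      also have "\<dots> \<le> e * norm (q - p)"
        using \<epsilon>(2) by (intro mult_right_mono) auto
      finally show "norm (\<Phi> q s - \<Phi> p s - W (q - p) s) \<le> e * norm (q - p)" .
    qed (use \<delta> in simp)
  qed
qed

end

lemma uniform_linearization_remainder:
  fixes f :: "real \<Rightarrow> real^'n \<Rightarrow> real^'m" and Df :: "real \<Rightarrow> real^'n \<Rightarrow> real^'n^'m"
    and I :: "real set" and R \<epsilon> :: real
  assumes I: "compact I"
    and der: "\<And>s v. s \<in> I \<Longrightarrow> (f s has_derivative (\<lambda>h. Df s v *v h)) (at v)"
    and cont: "continuous_on (I \<times> cball 0 R) (\<lambda>u. Df (fst u) (snd u))" and e: "\<epsilon> > 0"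
  obtains \<delta> where "\<delta> > 0"
    "\<And>s x y. s \<in> I \<Longrightarrow> x \<in> cball 0 R \<Longrightarrow> y \<in> cball 0 R \<Longrightarrow> norm (y - x) < \<delta> \<Longrightarrow>
       norm (f s y - f s x - Df s x *v (y - x)) \<le> \<epsilon> * norm (y - x)"
proof -
  define \<epsilon>' where "\<epsilon>' = \<epsilon> / (CARD('m) * CARD('n))"
  have \<epsilon>': "\<epsilon>' > 0" "real CARD('m) * real CARD('n) * \<epsilon>' = \<epsilon>"
    using e by (auto simp: \<epsilon>'_def)
  have "uniformly_continuous_on (I \<times> cball 0 R) (\<lambda>u. Df (fst u) (snd u))"
    by (rule compact_uniformly_continuous[OF cont compact_Times[OF I compact_cball]])
  then obtain \<delta> where \<delta>: "\<delta> > 0" and close: "\<And>u u'. u \<in> I \<times> cball 0 R \<Longrightarrow> u' \<in> I \<times> cball 0 R \<Longrightarrow>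
      dist u' u < \<delta> \<Longrightarrow> dist (Df (fst u') (snd u')) (Df (fst u) (snd u)) < \<epsilon>'"
    using \<epsilon>'(1) unfolding uniformly_continuous_on_def by metis
  show ?thesis
  proof (rule that[OF \<delta>])
    fix s :: real and x y :: "real^'n"
    assume s: "s \<in> I" and x: "x \<in> cball 0 R" and y: "y \<in> cball 0 R" and xy: "norm (y - x) < \<delta>"
    define S where "S = cball 0 R \<inter> ball x \<delta>"
    define g where "g w = f s w - Df s x *v w" for w
    have "(g has_derivative (\<lambda>h. (Df s w - Df s x) *v h)) (at w within S)" for w
      using has_derivative_diff[OF der[OF s, of w] bounded_linear.has_derivative[OF
          matrix_vector_mul_bounded_linear[of "Df s x"] has_derivative_ident]]
      unfolding g_def by (auto intro: has_derivative_at_withinI simp: matrix_vector_mult_diff_rdistrib)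
    moreover have "onorm (\<lambda>h. (Df s w - Df s x) *v h) \<le> \<epsilon>" if w: "w \<in> S" for w
    proof -
      have "dist (Df s w) (Df s x) < \<epsilon>'"
        using close[of "(s, x)" "(s, w)"] s x w by (auto simp: S_def dist_Pair_Pair dist_commute)
      then have "\<bar>(Df s w - Df s x) $ i $ j\<bar> \<le> \<epsilon>'" for i j
        using component_le_norm_cart[of "(Df s w - Df s x) $ i" j] Finite_Cartesian_Product.norm_nth_le[of "Df s w - Df s x" i]
        by (simp add: dist_norm)
      then show ?thesis
        using onorm_le_matrix_component[of "Df s w - Df s x" \<epsilon>'] \<epsilon>'(2) by simp
    qed
    moreover have "x \<in> S" "y \<in> S" "convex S"
      using x y xy \<delta> by (auto simp: S_def dist_norm norm_minus_commute intro: convex_Int)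
    ultimately have "norm (g y - g x) \<le> \<epsilon> * norm (y - x)"
      by (intro differentiable_bound[of S g]) auto
    then show "norm (f s y - f s x - Df s x *v (y - x)) \<le> \<epsilon> * norm (y - x)"
      by (simp add: g_def matrix_vector_mult_diff_distrib algebra_simps)
  qed
qed

(* A perturbation of y' = z, z' = 0 with y(b) = 0, z(b) = v, whose exact solution has y(a) = -(b - a) v. *)
locale near_identity_system =
  fixes a b L :: real and y z G :: "real \<Rightarrow> 'a::banach" and H :: "real \<Rightarrow> 'a \<Rightarrow> 'a" and v :: 'a
  assumes window: "a \<le> b" "b - a \<le> 1" and L: "0 \<le> L" "L * (b - a) \<le> 1/600"
    and continuous: "continuous_on {a..b} z" "continuous_on {a..b} (\<lambda>r. H r (z r))" "continuous_on {a..b} G"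
    and y_eq: "\<And>s. s \<in> {a..b} \<Longrightarrow> y s = - integral {s..b} (\<lambda>r. H r (z r))"
    and z_eq: "\<And>s. s \<in> {a..b} \<Longrightarrow> z s = v + integral {s..b} G"
    and H_near_id: "\<And>r w. r \<in> {a..b} \<Longrightarrow> norm (H r w - w) \<le> norm w / 50"
    and G_bound: "\<And>r. r \<in> {a..b} \<Longrightarrow> norm (G r) \<le> L * (norm (y r) + norm (z r))"
begin

lemma norm_H_le: "r \<in> {a..b} \<Longrightarrow> norm (H r w) \<le> 2 * norm w"
  using H_near_id[of r w] norm_triangle_ineq2[of "H r w" w] norm_ge_zero[of w] by linarith

lemma norm_y_le:
  assumes M: "\<And>r. r \<in> {a..b} \<Longrightarrow> norm (z r) \<le> M" and s: "s \<in> {a..b}"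
  shows "norm (y s) \<le> 2 * M"
proof -
  have "norm (y s) \<le> (b - a) * (2 * M)"
    unfolding y_eq[OF s] norm_minus_cancel using norm_H_le M
    by (intro norm_integral_tail_le[OF continuous(2) s]) (meson mult_left_mono order_trans zero_le_numeral)
  also have "\<dots> \<le> 1 * (2 * M)"
    using window order_trans[OF norm_ge_zero M[OF s]] by (intro mult_right_mono) auto
  finally show ?thesis
    by simp
qed

lemma norm_z_le:
  assumes s: "s \<in> {a..b}"
  shows "norm (z s) \<le> 2 * norm v"
proof (rule bootstrap_le_twice[where k = "3 * L * (b - a)", OF continuous_on_norm[OF continuous(1)] _ _ _ _ s])
  show "0 \<le> norm v" "0 \<le> 3 * L * (b - a)" "3 * L * (b - a) \<le> 1/2"
    using window L by auto
  fix M s'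
  assume M: "\<And>r. r \<in> {a..b} \<Longrightarrow> norm (z r) \<le> M" and s': "s' \<in> {a..b}"
  have "norm (G r) \<le> 3 * L * M" if r: "r \<in> {a..b}" for r
  proof -
    have "L * (norm (y r) + norm (z r)) \<le> L * (2 * M + M)"
      using norm_y_le[OF M r] M[OF r] L(1) by (intro mult_left_mono) auto
    then show ?thesis
      using G_bound[OF r] by simp
  qed
  then have "norm (integral {s'..b} G) \<le> (b - a) * (3 * L * M)"
    by (rule norm_integral_tail_le[OF continuous(3) s'])
  then show "norm (z s') \<le> norm v + 3 * L * (b - a) * M"
    unfolding z_eq[OF s'] using norm_triangle_ineq[of v "integral {s'..b} G"] by (simp add: algebra_simps)
qed

lemma norm_z_minus_le:
  assumes r: "r \<in> {a..b}"
  shows "norm (z r - v) \<le> norm v / 100"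
proof -
  have "norm (G r') \<le> L * (6 * norm v)" if r': "r' \<in> {a..b}" for r'
  proof -
    have "L * (norm (y r') + norm (z r')) \<le> L * (4 * norm v + 2 * norm v)"
      using norm_y_le[OF norm_z_le r'] norm_z_le[OF r'] L(1) by (intro mult_left_mono) auto
    then show ?thesis
      using G_bound[OF r'] by simp
  qed
  then have "norm (integral {r..b} G) \<le> (b - a) * (L * (6 * norm v))"
    by (rule norm_integral_tail_le[OF continuous(3) r])
  also have "\<dots> \<le> norm v / 100"
    using mult_right_mono[OF L(2), of "6 * norm v"] by (simp add: algebra_simps)
  finally show ?thesis
    using z_eq[OF r] by simp
qed

theorem norm_y_start_le: "norm (y a + (b - a) *\<^sub>R v) \<le> (b - a) / 20 * norm v"
proof -
  have "y a + (b - a) *\<^sub>R v = - integral {a..b} (\<lambda>r. H r (z r) - v)"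
    using window continuous(2) by (simp add: y_eq integral_diff integrable_continuous_interval)
  also have "norm \<dots> \<le> (b - a) * (norm v / 20)"
  proof (unfold norm_minus_cancel, rule norm_integral_tail_le)
    show "continuous_on {a..b} (\<lambda>r. H r (z r) - v)"
      using continuous(2) by (intro continuous_intros)
    show "norm (H r (z r) - v) \<le> norm v / 20" if r: "r \<in> {a..b}" for r
      using H_near_id[OF r, of "z r"] norm_z_le[OF r] norm_z_minus_le[OF r]
        norm_triangle_ineq[of "H r (z r) - z r" "z r - v"]
      by simp
  qed (use window in simp)
  finally show ?thesis
    by (simp add: algebra_simps)
qed

end

section \<open>The characteristic field\<close>

lemma norm_scaleR_inverse_le: "1 \<le> c \<Longrightarrow> norm ((1 / c) *\<^sub>R v) \<le> norm v"
  using mult_left_mono[of 1 c "norm v"] by (simp add: divide_le_eq)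

lemma norm_add3_le: "norm (x + y + z) \<le> norm x + norm y + norm z"
  by (metis add_right_mono norm_triangle_ineq order_trans)

lemma norm_add4_le: "norm (w + x + y + z) \<le> norm w + norm x + norm y + norm z"
  by (metis add_right_mono norm_add3_le norm_triangle_ineq order_trans)

lemma norm_fst_le_norm: "norm (fst w) \<le> norm w" and norm_snd_le_norm: "norm (snd w) \<le> norm w"
  by (metis norm_fst_le prod.collapse) (metis norm_snd_le prod.collapse)

lemma norm_fst_snd_le: "norm (fst w) + norm (snd w) \<le> 2 * norm w"
  using norm_fst_le_norm[of w] norm_snd_le_norm[of w] by simp

lemma norm_matrix_vector_mult_le:
  fixes A :: "real^'n^'m"
  shows "norm (A *v v) \<le> real CARD('m) * real CARD('n) * norm A * norm v"
proof -
  have "\<bar>A $ i $ j\<bar> \<le> norm A" for i j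
    using component_le_norm_cart[of "A $ i" j] Finite_Cartesian_Product.norm_nth_le[of A i] by simp
  then have "onorm ((*v) A) \<le> real CARD('m) * real CARD('n) * norm A"
    by (rule onorm_le_matrix_component)
  then show ?thesis
    using onorm[OF matrix_vector_mul_bounded_linear, of A v] mult_right_mono[of _ _ "norm v"] by force
qed

lemma W1inf_field_bounds:
  assumes "W1inf_field T C0 F DF" "t \<in> {0..T}"
  shows "norm (F t x) \<le> C0" "norm (DF t x) \<le> C0" "norm (DF t x *v v) \<le> 9 * C0 * norm v"
proof -
  show F: "norm (F t x) \<le> C0" and DF: "norm (DF t x) \<le> C0"
    using assms unfolding W1inf_field_def by (smt (verit) norm_ge_zero)+
  show "norm (DF t x *v v) \<le> 9 * C0 * norm v"
    using norm_matrix_vector_mult_le[of "DF t x" v] mult_right_mono[OF DF, of "9 * norm v"]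
    by (simp add: algebra_simps)
qed

lemma W1inf_field_nonneg:
  assumes "W1inf_field T C0 F DF" "0 \<le> T"
  shows "0 \<le> C0"
proof -
  have "norm (F 0 0) \<le> C0"
    using W1inf_field_bounds(1)[OF assms(1)] assms(2) by simp
  then show ?thesis
    using norm_ge_zero[of "F 0 0"] by linarith
qed

lemma W1inf_field_has_derivative:
  "W1inf_field T C0 F DF \<Longrightarrow> t \<in> {0..T} \<Longrightarrow> (F t has_derivative (\<lambda>h. DF t x *v h)) (at x)"
  unfolding W1inf_field_def by blast

lemma W1inf_field_lipschitz:
  assumes "W1inf_field T C0 F DF" "t \<in> {0..T}"
  shows "norm (F t x - F t y) \<le> 9 * C0 * norm (x - y)"
proof -
  have "onorm (\<lambda>h. DF t z *v h) \<le> 9 * C0" for z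
    using W1inf_field_bounds(3)[OF assms] by (intro onorm_le) auto
  then show ?thesis
    using W1inf_field_has_derivative[OF assms]
    by (intro differentiable_bound[of UNIV]) (auto intro: has_derivative_at_withinI)
qed

lemma W1inf_field_continuous_on_compose:
  assumes W: "W1inf_field T C0 F DF" and sub: "S \<subseteq> {0..T}" and g: "continuous_on S g"
  shows "continuous_on S (\<lambda>r. F r (g r))" "continuous_on S (\<lambda>r. DF r (g r))"
proof -
  have "continuous_on S (\<lambda>r. (r, g r))" "(\<lambda>r. (r, g r)) ` S \<subseteq> {0..T} \<times> UNIV"
    using g sub by (auto intro!: continuous_intros)
  then show "continuous_on S (\<lambda>r. F r (g r))" "continuous_on S (\<lambda>r. DF r (g r))"
    using W unfolding W1inf_field_def by (auto dest: continuous_on_compose2)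
qed

definition lorentz_force ::
  "real \<Rightarrow> (real \<Rightarrow> real^3 \<Rightarrow> real^3) \<Rightarrow> (real \<Rightarrow> real^3 \<Rightarrow> real^3) \<Rightarrow> real \<Rightarrow> real^3 \<Rightarrow> real^3 \<Rightarrow> real^3"
  where "lorentz_force c E B r y P = E r y + (1 / c) *\<^sub>R cross3 (phat c P) (B r y)"

definition lorentz_force_deriv ::
  "real \<Rightarrow> (real \<Rightarrow> real^3 \<Rightarrow> real^3) \<Rightarrow> (real \<Rightarrow> real^3 \<Rightarrow> real^3^3) \<Rightarrow> (real \<Rightarrow> real^3 \<Rightarrow> real^3^3)
    \<Rightarrow> real \<Rightarrow> real^3 \<Rightarrow> real^3 \<Rightarrow> real^3 \<Rightarrow> real^3 \<Rightarrow> real^3"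
  where "lorentz_force_deriv c B DE DB r y P dy dP =
    DE r y *v dy + (1 / c) *\<^sub>R cross3 (phat c P) (DB r y *v dy) + (1 / c) *\<^sub>R cross3 (dphat c P dP) (B r y)"

lemma lorentz_force_remainder_eq:
  "lorentz_force c E B r y2 P2 - lorentz_force c E B r y1 P1 - lorentz_force_deriv c B DE DB r y1 P1 (y2 - y1) (P2 - P1)
    = (E r y2 - E r y1 - DE r y1 *v (y2 - y1))
      + (1 / c) *\<^sub>R cross3 (phat c P2 - phat c P1 - dphat c P1 (P2 - P1)) (B r y2)
      + (1 / c) *\<^sub>R cross3 (dphat c P1 (P2 - P1)) (B r y2 - B r y1)
      + (1 / c) *\<^sub>R cross3 (phat c P1) (B r y2 - B r y1 - DB r y1 *v (y2 - y1))"
  unfolding lorentz_force_def lorentz_force_deriv_def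
  by (simp add: Cross3.left_diff_distrib Cross3.right_diff_distrib cross_add_left cross_add_right algebra_simps)

definition characteristic_field ::
  "real \<Rightarrow> (real \<Rightarrow> real^3 \<Rightarrow> real^3) \<Rightarrow> (real \<Rightarrow> real^3 \<Rightarrow> real^3) \<Rightarrow> real
    \<Rightarrow> (real^3) \<times> (real^3) \<Rightarrow> (real^3) \<times> (real^3)"
  where "characteristic_field c E B r u = (- phat c (snd u), lorentz_force c E B r (fst u) (snd u))"

definition characteristic_field_deriv ::
  "real \<Rightarrow> (real \<Rightarrow> real^3 \<Rightarrow> real^3) \<Rightarrow> (real \<Rightarrow> real^3 \<Rightarrow> real^3^3) \<Rightarrow> (real \<Rightarrow> real^3 \<Rightarrow> real^3^3)
    \<Rightarrow> real \<Rightarrow> (real^3) \<times> (real^3) \<Rightarrow> (real^3) \<times> (real^3) \<Rightarrow> (real^3) \<times> (real^3)"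
  where "characteristic_field_deriv c B DE DB r u v =
    (- dphat c (snd u) (snd v), lorentz_force_deriv c B DE DB r (fst u) (snd u) (fst v) (snd v))"

lemma linear_characteristic_field_deriv: "linear (characteristic_field_deriv c B DE DB r u)"
  by (rule linearI)
    (auto simp: characteristic_field_deriv_def lorentz_force_deriv_def linear_add[OF linear_dphat]
      linear_scale[OF linear_dphat] cross_add_left cross_add_right cross_mult_left cross_mult_right
      algebra_simps)

context
  fixes c T C0 :: real and E B :: "real \<Rightarrow> real^3 \<Rightarrow> real^3" and DE DB :: "real \<Rightarrow> real^3 \<Rightarrow> real^3^3"
  assumes c: "c \<ge> 1" and WE: "W1inf_field T C0 E DE" and WB: "W1inf_field T C0 B DB"
begin

lemma norm_lorentz_force_le:
  assumes r: "r \<in> {0..T}"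
  shows "norm (lorentz_force c E B r y P) \<le> 2 * C0"
proof -
  have "norm ((1 / c) *\<^sub>R cross3 (phat c P) (B r y)) \<le> norm (B r y)"
    using c by (intro norm_scaled_cross_phat_le) simp
  then show ?thesis
    using norm_triangle_ineq[of "E r y" "(1 / c) *\<^sub>R cross3 (phat c P) (B r y)"]
      W1inf_field_bounds(1)[OF WE r, of y] W1inf_field_bounds(1)[OF WB r, of y]
    unfolding lorentz_force_def by linarith
qed

lemma lorentz_force_lipschitz:
  assumes r: "r \<in> {0..T}"
  shows "norm (lorentz_force c E B r y1 P1 - lorentz_force c E B r y2 P2)
    \<le> 18 * C0 * norm (y1 - y2) + C0 * norm (P1 - P2)"
proof -
  have c0: "c > 0"
    using c by simp
  have "norm ((1 / c) *\<^sub>R cross3 (phat c P1 - phat c P2) (B r y1))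
      \<le> norm (cross3 (phat c P1 - phat c P2) (B r y1))"
    using c by (rule norm_scaleR_inverse_le)
  also have "\<dots> \<le> norm (P1 - P2) * C0"
    using norm_cross3_le[of "phat c P1 - phat c P2" "B r y1"]
      mult_mono[OF phat_lipschitz[OF c0, of P1 P2] W1inf_field_bounds(1)[OF WB r, of y1]]
    by simp
  finally have B1: "norm ((1 / c) *\<^sub>R cross3 (phat c P1 - phat c P2) (B r y1)) \<le> C0 * norm (P1 - P2)"
    by (simp add: mult.commute)
  have B2: "norm ((1 / c) *\<^sub>R cross3 (phat c P2) (B r y1 - B r y2)) \<le> 9 * C0 * norm (y1 - y2)"
    using norm_scaled_cross_phat_le[OF c0, of P2 "B r y1 - B r y2"] W1inf_field_lipschitz[OF WB r, of y1 y2]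
    by linarith
  have "lorentz_force c E B r y1 P1 - lorentz_force c E B r y2 P2 =
      (E r y1 - E r y2) + (1 / c) *\<^sub>R cross3 (phat c P1 - phat c P2) (B r y1)
      + (1 / c) *\<^sub>R cross3 (phat c P2) (B r y1 - B r y2)"
    unfolding lorentz_force_def
    by (simp add: Cross3.left_diff_distrib Cross3.right_diff_distrib algebra_simps)
  then have "norm (lorentz_force c E B r y1 P1 - lorentz_force c E B r y2 P2)
      \<le> norm (E r y1 - E r y2) + norm ((1 / c) *\<^sub>R cross3 (phat c P1 - phat c P2) (B r y1))
        + norm ((1 / c) *\<^sub>R cross3 (phat c P2) (B r y1 - B r y2))"
    by (simp only: norm_add3_le)
  then show ?thesis
    using B1 B2 W1inf_field_lipschitz[OF WE r, of y1 y2] by linarith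
qed

lemma norm_lorentz_force_deriv_le:
  assumes r: "r \<in> {0..T}"
  shows "norm (lorentz_force_deriv c B DE DB r y P dy dP) \<le> 18 * C0 * norm dy + C0 * norm (dphat c P dP)"
proof -
  have "norm ((1 / c) *\<^sub>R cross3 (dphat c P dP) (B r y)) \<le> norm (cross3 (dphat c P dP) (B r y))"
    using c by (rule norm_scaleR_inverse_le)
  also have "\<dots> \<le> norm (dphat c P dP) * C0"
    using norm_cross3_le[of "dphat c P dP" "B r y"]
      mult_left_mono[OF W1inf_field_bounds(1)[OF WB r, of y] norm_ge_zero[of "dphat c P dP"]]
    by linarith
  finally have "norm ((1 / c) *\<^sub>R cross3 (dphat c P dP) (B r y)) \<le> C0 * norm (dphat c P dP)"
    by (simp add: mult.commute)
  moreover have "norm ((1 / c) *\<^sub>R cross3 (phat c P) (DB r y *v dy)) \<le> 9 * C0 * norm dy"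
    using norm_scaled_cross_phat_le[of c P "DB r y *v dy"] W1inf_field_bounds(3)[OF WB r, of y dy] c
    by simp
  moreover have "norm (lorentz_force_deriv c B DE DB r y P dy dP) \<le> norm (DE r y *v dy)
      + norm ((1 / c) *\<^sub>R cross3 (phat c P) (DB r y *v dy)) + norm ((1 / c) *\<^sub>R cross3 (dphat c P dP) (B r y))"
    unfolding lorentz_force_deriv_def by (rule norm_add3_le)
  ultimately show ?thesis
    using W1inf_field_bounds(3)[OF WE r, of y dy] by linarith
qed

lemma lorentz_force_remainder:
  assumes r: "r \<in> {0..T}" and \<epsilon>: "0 \<le> \<epsilon>"
    and rem_E: "norm (E r y2 - E r y1 - DE r y1 *v (y2 - y1)) \<le> \<epsilon> * norm (y2 - y1)"
    and rem_B: "norm (B r y2 - B r y1 - DB r y1 *v (y2 - y1)) \<le> \<epsilon> * norm (y2 - y1)"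
    and rem_P: "norm (phat c P2 - phat c P1 - dphat c P1 (P2 - P1)) \<le> \<epsilon> * norm (P2 - P1)"
    and close: "9 * C0 * norm (y2 - y1) \<le> \<epsilon>"
  shows "norm (lorentz_force c E B r y2 P2 - lorentz_force c E B r y1 P1
      - lorentz_force_deriv c B DE DB r y1 P1 (y2 - y1) (P2 - P1))
    \<le> (C0 + 2) * \<epsilon> * (norm (y2 - y1) + norm (P2 - P1))"
proof -
  have c0: "c > 0"
    using c by simp
  have C0: "0 \<le> C0"
    using order_trans[OF norm_ge_zero W1inf_field_bounds(1)[OF WB r, of y1]] .
  define dy dP where "dy = y2 - y1" and "dP = P2 - P1"
  define A2 where "A2 = cross3 (phat c P2 - phat c P1 - dphat c P1 dP) (B r y2)"
  define A3 where "A3 = cross3 (dphat c P1 dP) (B r y2 - B r y1)"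
  define A4 where "A4 = cross3 (phat c P1) (B r y2 - B r y1 - DB r y1 *v dy)"
  have "norm (lorentz_force c E B r y2 P2 - lorentz_force c E B r y1 P1
        - lorentz_force_deriv c B DE DB r y1 P1 dy dP)
      \<le> norm (E r y2 - E r y1 - DE r y1 *v dy) + norm ((1 / c) *\<^sub>R A2) + norm ((1 / c) *\<^sub>R A3)
        + norm ((1 / c) *\<^sub>R A4)"
    unfolding dy_def dP_def lorentz_force_remainder_eq A2_def A3_def A4_def by (rule norm_add4_le)
  moreover have "norm ((1 / c) *\<^sub>R A2) \<le> \<epsilon> * norm dP * C0"
  proof -
    have "norm ((1 / c) *\<^sub>R A2) \<le> norm A2"
      using c by (rule norm_scaleR_inverse_le)
    also have "\<dots> \<le> \<epsilon> * norm dP * C0"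
      unfolding A2_def dP_def
      using norm_cross3_le[of "phat c P2 - phat c P1 - dphat c P1 (P2 - P1)" "B r y2"]
        mult_mono[OF rem_P W1inf_field_bounds(1)[OF WB r, of y2]] \<epsilon>
      by simp
    finally show ?thesis .
  qed
  moreover have "norm ((1 / c) *\<^sub>R A3) \<le> norm dP * \<epsilon>"
  proof -
    have "norm ((1 / c) *\<^sub>R A3) \<le> norm A3"
      using c by (rule norm_scaleR_inverse_le)
    also have "\<dots> \<le> norm dP * (9 * C0 * norm dy)"
      unfolding A3_def using norm_cross3_le norm_dphat_le[OF c0, of P1 dP]
        W1inf_field_lipschitz[OF WB r, of y2 y1]
      by (smt (verit) dy_def mult_mono norm_ge_zero)
    also have "\<dots> \<le> norm dP * \<epsilon>"
      using close by (intro mult_left_mono) (auto simp: dy_def)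
    finally show ?thesis .
  qed
  moreover have "norm ((1 / c) *\<^sub>R A4) \<le> \<epsilon> * norm dy"
    using norm_scaled_cross_phat_le[OF c0, of P1 "B r y2 - B r y1 - DB r y1 *v dy"] rem_B
    unfolding A4_def dy_def by linarith
  moreover have "\<epsilon> * norm dy + \<epsilon> * norm dP * C0 + norm dP * \<epsilon> + \<epsilon> * norm dy
      \<le> (C0 + 2) * \<epsilon> * (norm dy + norm dP)"
    using mult_nonneg_nonneg[OF mult_nonneg_nonneg[OF C0 \<epsilon>] norm_ge_zero[of dy]]
      mult_nonneg_nonneg[OF \<epsilon> norm_ge_zero[of dP]]
    by (simp add: algebra_simps)
  ultimately show ?thesis
    using rem_E unfolding dy_def[symmetric] dP_def[symmetric] by linarith
qed

lemma characteristic_field_lipschitz: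
  assumes r: "r \<in> {0..T}"
  shows "norm (characteristic_field c E B r u - characteristic_field c E B r v) \<le> 40 * (C0 + 1) * norm (u - v)"
proof -
  have C0: "0 \<le> C0"
    using order_trans[OF norm_ge_zero W1inf_field_bounds(1)[OF WB r]] .
  have c0: "c > 0"
    using c by simp
  have "characteristic_field c E B r u - characteristic_field c E B r v =
      (- (phat c (snd u) - phat c (snd v)),
       lorentz_force c E B r (fst u) (snd u) - lorentz_force c E B r (fst v) (snd v))"
    by (simp add: characteristic_field_def)
  then have "norm (characteristic_field c E B r u - characteristic_field c E B r v)
      \<le> norm (phat c (snd u) - phat c (snd v))
        + norm (lorentz_force c E B r (fst u) (snd u) - lorentz_force c E B r (fst v) (snd v))"
    using norm_Pair_le[of "- (phat c (snd u) - phat c (snd v))"] by (simp only: norm_minus_cancel)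
  also have "\<dots> \<le> (18 * C0 + 1) * (norm (fst (u - v)) + norm (snd (u - v)))"
    using phat_lipschitz[OF c0, of "snd u" "snd v"] lorentz_force_lipschitz[OF r, of "fst u" "snd u" "fst v" "snd v"]
      mult_nonneg_nonneg[OF C0 norm_ge_zero[of "snd u - snd v"]]
    by (simp add: algebra_simps) (use norm_ge_zero[of "fst u - fst v"] in linarith)
  also have "\<dots> \<le> (18 * C0 + 1) * (2 * norm (u - v))"
    using C0 norm_fst_snd_le[of "u - v"] by (intro mult_left_mono) auto
  also have "\<dots> \<le> 40 * (C0 + 1) * norm (u - v)"
    using C0 by (simp add: algebra_simps)
  finally show ?thesis .
qed

lemma norm_characteristic_field_deriv_le:
  assumes r: "r \<in> {0..T}"
  shows "norm (characteristic_field_deriv c B DE DB r u v) \<le> 40 * (C0 + 1) * norm v"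
proof -
  have C0: "0 \<le> C0"
    using order_trans[OF norm_ge_zero W1inf_field_bounds(1)[OF WB r]] .
  have dP: "norm (dphat c (snd u) (snd v)) \<le> norm (snd v)"
    using c by (intro norm_dphat_le) simp
  have "norm (characteristic_field_deriv c B DE DB r u v)
      \<le> norm (dphat c (snd u) (snd v)) + norm (lorentz_force_deriv c B DE DB r (fst u) (snd u) (fst v) (snd v))"
    unfolding characteristic_field_deriv_def
    using norm_Pair_le[of "- dphat c (snd u) (snd v)"] by (simp only: norm_minus_cancel)
  also have "\<dots> \<le> (18 * C0 + 1) * (norm (fst v) + norm (snd v))"
    using dP norm_lorentz_force_deriv_le[OF r, of "fst u" "snd u" "fst v" "snd v"]
      mult_left_mono[OF dP C0] mult_nonneg_nonneg[OF C0 norm_ge_zero[of "snd v"]]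
    by (simp add: algebra_simps) (use norm_ge_zero[of "fst v"] in linarith)
  also have "\<dots> \<le> (18 * C0 + 1) * (2 * norm v)"
    using C0 norm_fst_snd_le[of v] by (intro mult_left_mono) auto
  also have "\<dots> \<le> 40 * (C0 + 1) * norm v"
    using C0 by (simp add: algebra_simps)
  finally show ?thesis .
qed

lemma characteristic_field_remainder:
  assumes r: "r \<in> {0..T}" and \<epsilon>: "0 \<le> \<epsilon>"
    and rem_E: "norm (E r (fst v) - E r (fst u) - DE r (fst u) *v (fst v - fst u)) \<le> \<epsilon> * norm (fst v - fst u)"
    and rem_B: "norm (B r (fst v) - B r (fst u) - DB r (fst u) *v (fst v - fst u)) \<le> \<epsilon> * norm (fst v - fst u)"
    and rem_P: "norm (phat c (snd v) - phat c (snd u) - dphat c (snd u) (snd v - snd u)) \<le> \<epsilon> * norm (snd v - snd u)"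
    and close: "9 * C0 * norm (fst v - fst u) \<le> \<epsilon>"
  shows "norm (characteristic_field c E B r v - characteristic_field c E B r u
      - characteristic_field_deriv c B DE DB r u (v - u)) \<le> 2 * (C0 + 3) * \<epsilon> * norm (v - u)"
proof -
  have C0: "0 \<le> C0"
    using order_trans[OF norm_ge_zero W1inf_field_bounds(1)[OF WB r]] .
  have "characteristic_field c E B r v - characteristic_field c E B r u
      - characteristic_field_deriv c B DE DB r u (v - u) =
      (- (phat c (snd v) - phat c (snd u) - dphat c (snd u) (snd v - snd u)),
       lorentz_force c E B r (fst v) (snd v) - lorentz_force c E B r (fst u) (snd u)
        - lorentz_force_deriv c B DE DB r (fst u) (snd u) (fst v - fst u) (snd v - snd u))"
    by (simp add: characteristic_field_def characteristic_field_deriv_def algebra_simps)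
  then have "norm (characteristic_field c E B r v - characteristic_field c E B r u
      - characteristic_field_deriv c B DE DB r u (v - u))
    \<le> norm (phat c (snd v) - phat c (snd u) - dphat c (snd u) (snd v - snd u))
      + norm (lorentz_force c E B r (fst v) (snd v) - lorentz_force c E B r (fst u) (snd u)
        - lorentz_force_deriv c B DE DB r (fst u) (snd u) (fst v - fst u) (snd v - snd u))"
    using norm_Pair_le[of "- (phat c (snd v) - phat c (snd u) - dphat c (snd u) (snd v - snd u))"]
    by (simp only: norm_minus_cancel)
  also have "\<dots> \<le> (C0 + 3) * \<epsilon> * (norm (fst v - fst u) + norm (snd v - snd u))"
    using rem_P lorentz_force_remainder[OF r \<epsilon> rem_E rem_B rem_P close]
      mult_nonneg_nonneg[OF \<epsilon> norm_ge_zero[of "fst v - fst u"]] by (simp add: algebra_simps)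
  also have "\<dots> \<le> (C0 + 3) * \<epsilon> * (2 * norm (v - u))"
    using C0 \<epsilon> norm_fst_snd_le[of "v - u"] by (intro mult_left_mono) auto
  finally show ?thesis
    by (simp add: algebra_simps)
qed

lemma continuous_on_characteristic_field:
  assumes "S \<subseteq> {0..T}" "continuous_on S u"
  shows "continuous_on S (\<lambda>r. characteristic_field c E B r (u r))"
  unfolding characteristic_field_def lorentz_force_def using c
  by (intro continuous_intros continuous_on_phat continuous_on_cross
      W1inf_field_continuous_on_compose[OF WE assms(1)] W1inf_field_continuous_on_compose[OF WB assms(1)]
      assms(2)) auto

lemma continuous_on_characteristic_field_deriv:
  assumes "S \<subseteq> {0..T}" "continuous_on S u" "continuous_on S v"
  shows "continuous_on S (\<lambda>r. characteristic_field_deriv c B DE DB r (u r) (v r))"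
  unfolding characteristic_field_deriv_def lorentz_force_deriv_def matrix_vector_mult_def using c
  by (intro continuous_intros continuous_on_phat continuous_on_dphat continuous_on_cross
      W1inf_field_continuous_on_compose[OF WE assms(1)] W1inf_field_continuous_on_compose[OF WB assms(1)]
      assms(2,3)) auto

end

section \<open>A short time window of a characteristic\<close>

locale characteristic_window =
  fixes c T C0 :: real and E B :: "real \<Rightarrow> real^3 \<Rightarrow> real^3" and DE DB :: "real \<Rightarrow> real^3 \<Rightarrow> real^3^3"
    and X P :: "real \<Rightarrow> real^3 \<Rightarrow> real^3 \<Rightarrow> real \<Rightarrow> real^3" and a b :: real and x p :: "real^3"
  assumes c: "c \<ge> 1" and WE: "W1inf_field T C0 E DE" and WB: "W1inf_field T C0 B DB"
    and flow: "is_characteristic_flow c T E B X P"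
    and window: "0 \<le> a" "a \<le> b" "b \<le> T"
    and short_window: "(b - a) * (C0 + 1) \<le> 1 / 20000"
begin

lemma C0_nonneg: "0 \<le> C0"
  using W1inf_field_nonneg[OF WE] window by simp

lemma window_subset: "{a..b} \<subseteq> {0..T}"
  using window by auto

definition orbit :: "real^3 \<Rightarrow> real \<Rightarrow> (real^3) \<times> (real^3)" where
  "orbit q s = (X b x q s, P b x q s)"

lemma orbit_has_vector_derivative:
  assumes s: "s \<in> {0..T}"
  shows "(orbit q has_vector_derivative - characteristic_field c E B s (orbit q s)) (at s within {0..T})"
proof -
  have "b \<in> {0..T}"
    using window by simp
  then have "((\<lambda>r. (X b x q r, P b x q r)) has_vector_derivative
      (phat c (P b x q s), - E s (X b x q s)
        - cross3 ((1 / pzero c (P b x q s)) *\<^sub>R P b x q s) (B s (X b x q s)))) (at s within {0..T})"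
    using flow s unfolding is_characteristic_flow_def by (intro has_vector_derivative_Pair) auto
  moreover have "orbit q = (\<lambda>r. (X b x q r, P b x q r))"
    by (simp add: fun_eq_iff orbit_def)
  ultimately show ?thesis
    using c unfolding characteristic_field_def lorentz_force_def
    by (simp add: orbit_def phat_def cross_mult_left)
qed

lemma orbit_continuous: "continuous_on {a..b} (orbit q)"
  using continuous_on_vector_derivative[OF orbit_has_vector_derivative] window_subset
  by (rule continuous_on_subset)

lemma orbit_solution:
  "backward_integral_solution a b (characteristic_field c E B) ((x, 0) + (0, q)) (orbit q)"
  unfolding backward_integral_solution_def
proof (intro conjI ballI orbit_continuous)
  fix s
  assume s: "s \<in> {a..b}"
  have "((\<lambda>r. - characteristic_field c E B r (orbit q r)) has_integral (orbit q b - orbit q s)) {s..b}"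
  proof (rule fundamental_theorem_of_calculus)
    show "(orbit q has_vector_derivative - characteristic_field c E B r (orbit q r)) (at r within {s..b})"
      if "r \<in> {s..b}" for r
      using that s window_subset
      by (intro has_vector_derivative_within_subset[OF orbit_has_vector_derivative]) auto
  qed (use s in simp)
  from has_integral_neg[OF this]
  have "integral {s..b} (\<lambda>r. characteristic_field c E B r (orbit q r)) = orbit q s - orbit q b"
    by (simp add: integral_unique)
  moreover have "orbit q b = (x, 0) + (0, q)"
    using flow window by (simp add: is_characteristic_flow_def orbit_def)
  ultimately show "orbit q s = (x, 0) + (0, q) + integral {s..b} (\<lambda>r. characteristic_field c E B r (orbit q r))"
    by simp
qed

lemma window_lipschitz_small: "40 * (C0 + 1) * (b - a) \<le> 1/2"
  using short_window by (simp add: algebra_simps)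

sublocale characteristic: lipschitz_integral_equation a b "40 * (C0 + 1)" "characteristic_field c E B"
proof
  show "continuous_on {a..b} (\<lambda>r. characteristic_field c E B r (u r))" if "continuous_on {a..b} u" for u
    by (rule continuous_on_characteristic_field[OF c WE WB window_subset that])
  show "norm (characteristic_field c E B r v - characteristic_field c E B r w) \<le> 40 * (C0 + 1) * norm (v - w)"
    if "r \<in> {a..b}" for r v w
    using characteristic_field_lipschitz[OF c WE WB] that window_subset by blast
qed (use C0_nonneg window_lipschitz_small in auto)

sublocale linearized: lipschitz_integral_equation a b "40 * (C0 + 1)"
  "\<lambda>r. characteristic_field_deriv c B DE DB r (orbit p r)"
proof
  show "continuous_on {a..b} (\<lambda>r. characteristic_field_deriv c B DE DB r (orbit p r) (u r))"
    if "continuous_on {a..b} u" for u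
    by (rule continuous_on_characteristic_field_deriv[OF c WE WB window_subset orbit_continuous that])
  show "norm (characteristic_field_deriv c B DE DB r (orbit p r) v - characteristic_field_deriv c B DE DB r (orbit p r) w)
      \<le> 40 * (C0 + 1) * norm (v - w)" if "r \<in> {a..b}" for r v w
    using norm_characteristic_field_deriv_le[OF c WE WB, of r "orbit p r" "v - w"] that window_subset
    by (auto simp: linear_diff[OF linear_characteristic_field_deriv])
qed (use C0_nonneg window_lipschitz_small in auto)

definition tangent :: "real^3 \<Rightarrow> real \<Rightarrow> (real^3) \<times> (real^3)" where
  "tangent k = (SOME w. backward_integral_solution a b
     (\<lambda>r. characteristic_field_deriv c B DE DB r (orbit p r)) (0, k) w)"

lemma tangent_solution:
  "backward_integral_solution a b (\<lambda>r. characteristic_field_deriv c B DE DB r (orbit p r)) (0, k) (tangent k)"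
proof -
  obtain w where "backward_integral_solution a b
      (\<lambda>r. characteristic_field_deriv c B DE DB r (orbit p r)) (0, k) w"
    using linearized.solution_exists[OF window(2)] .
  then show ?thesis
    unfolding tangent_def by (metis someI_ex)
qed

lemma tangent_continuous: "continuous_on {a..b} (tangent k)"
  using tangent_solution by (simp add: backward_integral_solution_def)

lemma momentum_continuous: "continuous_on {a..b} (P b x p)"
  using continuous_on_snd[OF orbit_continuous[of p]] by (simp add: orbit_def)

lemma window_uniform_remainders:
  assumes \<epsilon>: "\<epsilon> > 0"
  obtains \<delta> where "\<delta> > 0" "\<delta> \<le> 1" "9 * C0 * \<delta> \<le> \<epsilon>"
    and "\<And>s y1 y2. s \<in> {a..b} \<Longrightarrow> y1 \<in> cball 0 R \<Longrightarrow> y2 \<in> cball 0 R \<Longrightarrow>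
      norm (y2 - y1) < \<delta> \<Longrightarrow>
      norm (E s y2 - E s y1 - DE s y1 *v (y2 - y1)) \<le> \<epsilon> * norm (y2 - y1) \<and>
      norm (B s y2 - B s y1 - DB s y1 *v (y2 - y1)) \<le> \<epsilon> * norm (y2 - y1) \<and>
      norm (phat c y2 - phat c y1 - dphat c y1 (y2 - y1)) \<le> \<epsilon> * norm (y2 - y1)"
proof -
  have c0: "c > 0"
    using c by simp
  have field_cont: "continuous_on ({a..b} \<times> cball 0 R) (\<lambda>u. DF (fst u) (snd u))"
    if "W1inf_field T C0 F DF" for F DF
    using that window_subset unfolding W1inf_field_def case_prod_beta
    by (auto intro: continuous_on_subset)
  obtain \<delta>E where \<delta>E: "\<delta>E > 0" and rem_E: "\<And>s y1 y2. s \<in> {a..b} \<Longrightarrow> y1 \<in> cball 0 R \<Longrightarrow>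
      y2 \<in> cball 0 R \<Longrightarrow> norm (y2 - y1) < \<delta>E \<Longrightarrow>
      norm (E s y2 - E s y1 - DE s y1 *v (y2 - y1)) \<le> \<epsilon> * norm (y2 - y1)"
    using uniform_linearization_remainder[OF compact_Icc _ field_cont[OF WE] \<epsilon>, of E]
      W1inf_field_has_derivative[OF WE] window_subset by blast
  obtain \<delta>B where \<delta>B: "\<delta>B > 0" and rem_B: "\<And>s y1 y2. s \<in> {a..b} \<Longrightarrow> y1 \<in> cball 0 R \<Longrightarrow>
      y2 \<in> cball 0 R \<Longrightarrow> norm (y2 - y1) < \<delta>B \<Longrightarrow>
      norm (B s y2 - B s y1 - DB s y1 *v (y2 - y1)) \<le> \<epsilon> * norm (y2 - y1)"
    using uniform_linearization_remainder[OF compact_Icc _ field_cont[OF WB] \<epsilon>, of B]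
      W1inf_field_has_derivative[OF WB] window_subset by blast
  have "continuous_on ({a..b} \<times> cball 0 R) (\<lambda>u. matrix (dphat c (snd u)))"
    by (intro continuous_on_matrix_dphat[OF c0] continuous_intros)
  moreover have "(phat c has_derivative (\<lambda>h. matrix (dphat c P) *v h)) (at P)" for P
    using has_derivative_phat[OF c0, of P] by (simp add: matrix_dphat_mult)
  ultimately obtain \<delta>P where \<delta>P: "\<delta>P > 0" and rem_P: "\<And>s P1 P2. s \<in> {a..b} \<Longrightarrow> P1 \<in> cball 0 R \<Longrightarrow>
      P2 \<in> cball 0 R \<Longrightarrow> norm (P2 - P1) < \<delta>P \<Longrightarrow>
      norm (phat c P2 - phat c P1 - dphat c P1 (P2 - P1)) \<le> \<epsilon> * norm (P2 - P1)"
    using uniform_linearization_remainder[where f = "\<lambda>_. phat c" and Df = "\<lambda>_ P. matrix (dphat c P)"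
        and I = "{a..b}" and R = R and \<epsilon> = \<epsilon>] \<epsilon> by (auto simp: matrix_dphat_mult)
  define \<delta> where "\<delta> = min (min \<delta>E (min \<delta>B \<delta>P)) (min 1 (\<epsilon> / (9 * C0 + 1)))"
  have "9 * C0 * \<delta> \<le> 9 * C0 * (\<epsilon> / (9 * C0 + 1))"
    using C0_nonneg by (intro mult_left_mono) (auto simp: \<delta>_def)
  also have "\<dots> \<le> \<epsilon>"
    using C0_nonneg \<epsilon> by (simp add: field_simps)
  finally show ?thesis
    using \<delta>E \<delta>B \<delta>P \<epsilon> C0_nonneg rem_E rem_B rem_P by (intro that[of \<delta>]) (auto simp: \<delta>_def)
qed

lemma orbit_linearization_remainder:
  assumes \<epsilon>: "\<epsilon> > 0"
  shows "\<exists>\<delta>>0. \<forall>r\<in>{a..b}. \<forall>v. norm (v - orbit p r) < \<delta> \<longrightarrow>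
    norm (characteristic_field c E B r v - characteristic_field c E B r (orbit p r)
      - characteristic_field_deriv c B DE DB r (orbit p r) (v - orbit p r)) \<le> \<epsilon> * norm (v - orbit p r)"
proof -
  obtain R where R: "\<And>r. r \<in> {a..b} \<Longrightarrow> norm (orbit p r) \<le> R"
    using compact_imp_bounded[OF compact_continuous_image[OF orbit_continuous compact_Icc]]
    unfolding bounded_iff by blast
  define \<epsilon>' where "\<epsilon>' = \<epsilon> / (2 * (C0 + 3))"
  have \<epsilon>': "\<epsilon>' > 0" "2 * (C0 + 3) * \<epsilon>' = \<epsilon>"
    using \<epsilon> C0_nonneg by (auto simp: \<epsilon>'_def)
  obtain \<delta> where \<delta>: "\<delta> > 0" "\<delta> \<le> 1" "9 * C0 * \<delta> \<le> \<epsilon>'"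
    and rem: "\<And>s y1 y2. s \<in> {a..b} \<Longrightarrow> y1 \<in> cball 0 (R + 1) \<Longrightarrow> y2 \<in> cball 0 (R + 1) \<Longrightarrow>
      norm (y2 - y1) < \<delta> \<Longrightarrow>
      norm (E s y2 - E s y1 - DE s y1 *v (y2 - y1)) \<le> \<epsilon>' * norm (y2 - y1) \<and>
      norm (B s y2 - B s y1 - DB s y1 *v (y2 - y1)) \<le> \<epsilon>' * norm (y2 - y1) \<and>
      norm (phat c y2 - phat c y1 - dphat c y1 (y2 - y1)) \<le> \<epsilon>' * norm (y2 - y1)"
    using window_uniform_remainders[OF \<epsilon>'(1)] by blast
  show ?thesis
  proof (intro exI[of _ \<delta>] conjI ballI allI impI \<delta>(1))
    fix r v
    assume r: "r \<in> {a..b}" and v: "norm (v - orbit p r) < \<delta>"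
    define u where "u = orbit p r"
    have dy: "norm (fst v - fst u) < \<delta>" and dP: "norm (snd v - snd u) < \<delta>"
      using v norm_fst_le_norm[of "v - u"] norm_snd_le_norm[of "v - u"] by (auto simp: u_def)
    have "norm v \<le> norm u + norm (v - u)"
      using norm_triangle_ineq[of u "v - u"] by simp
    then have "norm u \<le> R + 1" "norm v \<le> R + 1"
      using R[OF r] v \<delta>(2) by (auto simp: u_def)
    then have u: "fst u \<in> cball 0 (R + 1)" "snd u \<in> cball 0 (R + 1)"
      and v': "fst v \<in> cball 0 (R + 1)" "snd v \<in> cball 0 (R + 1)"
      using norm_fst_le_norm[of u] norm_snd_le_norm[of u] norm_fst_le_norm[of v] norm_snd_le_norm[of v]
      by auto
    have close: "9 * C0 * norm (fst v - fst u) \<le> \<epsilon>'"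
      using mult_left_mono[of "norm (fst v - fst u)" \<delta> "9 * C0"] dy \<delta>(3) C0_nonneg by simp
    have rem_y: "norm (E r (fst v) - E r (fst u) - DE r (fst u) *v (fst v - fst u)) \<le> \<epsilon>' * norm (fst v - fst u) \<and>
        norm (B r (fst v) - B r (fst u) - DB r (fst u) *v (fst v - fst u)) \<le> \<epsilon>' * norm (fst v - fst u)"
      and rem_P: "norm (phat c (snd v) - phat c (snd u) - dphat c (snd u) (snd v - snd u)) \<le> \<epsilon>' * norm (snd v - snd u)"
      using rem[OF r u(1) v'(1) dy] rem[OF r u(2) v'(2) dP] by auto
    have "r \<in> {0..T}"
      using r window_subset by auto
    then have "norm (characteristic_field c E B r v - characteristic_field c E B r u
        - characteristic_field_deriv c B DE DB r u (v - u)) \<le> 2 * (C0 + 3) * \<epsilon>' * norm (v - u)"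
      using rem_y \<epsilon>'(1) by (intro characteristic_field_remainder[OF c WE WB _ _ _ _ rem_P close]) auto
    then show "norm (characteristic_field c E B r v - characteristic_field c E B r (orbit p r)
        - characteristic_field_deriv c B DE DB r (orbit p r) (v - orbit p r)) \<le> \<epsilon> * norm (v - orbit p r)"
      unfolding \<epsilon>'(2) u_def .
  qed
qed

lemma orbit_has_derivative:
  assumes s: "s \<in> {a..b}"
  shows "((\<lambda>q. orbit q s) has_derivative (\<lambda>k. tangent k s)) (at p)"
proof (rule characteristic.solution_has_derivative[where \<iota> = "\<lambda>k. (0, k)" and \<Phi> = orbit and p = p
      and W = tangent and DF = "characteristic_field_deriv c B DE DB", OF orbit_solution tangent_solution])
  show "linear (\<lambda>k::real^3. (0::real^3, k))"
    by (rule linearI) simp_all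
  show "norm (0::real^3, k) \<le> norm k" for k :: "real^3"
    by (simp add: norm_Pair)
  show "linear (characteristic_field_deriv c B DE DB r v)" for r v
    by (rule linear_characteristic_field_deriv)
  show "norm (characteristic_field_deriv c B DE DB r v w) \<le> 40 * (C0 + 1) * norm w" if "r \<in> {a..b}" for r v w
    using norm_characteristic_field_deriv_le[OF c WE WB] that window_subset by blast
  show "continuous_on {a..b} (\<lambda>r. characteristic_field_deriv c B DE DB r (orbit p r) (w r))"
    if "continuous_on {a..b} w" for w
    by (rule continuous_on_characteristic_field_deriv[OF c WE WB window_subset orbit_continuous that])
qed (use orbit_linearization_remainder s in auto)

lemma flow_has_derivative: "((\<lambda>q. X b x q a) has_derivative (\<lambda>k. fst (tangent k a))) (at p)"
  using has_derivative_fst[OF orbit_has_derivative[of a]] window by (simp add: orbit_def)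

lemma tangent_components:
  assumes s: "s \<in> {a..b}"
  shows "fst (tangent k s) = - integral {s..b} (\<lambda>r. dphat c (P b x p r) (snd (tangent k r)))"
    and "snd (tangent k s) = k + integral {s..b} (\<lambda>r. lorentz_force_deriv c B DE DB r
      (X b x p r) (P b x p r) (fst (tangent k r)) (snd (tangent k r)))"
proof -
  have "continuous_on {a..b} (\<lambda>r. characteristic_field_deriv c B DE DB r (orbit p r) (tangent k r))"
    using linearized.continuous_field tangent_solution by (auto simp: backward_integral_solution_def)
  then have "(\<lambda>r. characteristic_field_deriv c B DE DB r (orbit p r) (tangent k r)) integrable_on {s..b}"
    by (rule integrable_on_tail[OF _ s])
  then show "fst (tangent k s) = - integral {s..b} (\<lambda>r. dphat c (P b x p r) (snd (tangent k r)))"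
    and "snd (tangent k s) = k + integral {s..b} (\<lambda>r. lorentz_force_deriv c B DE DB r
      (X b x p r) (P b x p r) (fst (tangent k r)) (snd (tangent k r)))"
    using tangent_solution[of k] s
    by (simp_all add: backward_integral_solution_def integral_fst_snd characteristic_field_deriv_def orbit_def)
qed

lemma momentum_near_initial:
  assumes r: "r \<in> {a..b}"
  shows "norm (P b x p r - p) \<le> 1/300"
proof -
  have field_cont: "continuous_on {a..b} (\<lambda>r. characteristic_field c E B r (orbit p r))"
    by (rule characteristic.continuous_field[OF orbit_continuous])
  then have cont: "continuous_on {a..b} (\<lambda>r. lorentz_force c E B r (X b x p r) (P b x p r))"
    unfolding characteristic_field_def orbit_def by (auto dest: continuous_on_snd)
  from orbit_solution[of p] r
  have eq: "orbit p r = (x, 0) + (0, p) + integral {r..b} (\<lambda>r. characteristic_field c E B r (orbit p r))"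
    unfolding backward_integral_solution_def by blast
  have "P b x p r - p = snd (orbit p r) - p"
    by (simp add: orbit_def)
  also have "\<dots> = snd (integral {r..b} (\<lambda>r. characteristic_field c E B r (orbit p r)))"
    by (subst eq) simp
  also have "\<dots> = integral {r..b} (\<lambda>r. lorentz_force c E B r (X b x p r) (P b x p r))"
    using integral_fst_snd(2)[OF integrable_on_tail[OF field_cont r]]
    by (simp add: characteristic_field_def orbit_def)
  also have "norm \<dots> \<le> (b - a) * (2 * C0)"
    using norm_lorentz_force_le[OF c WE WB] window_subset by (intro norm_integral_tail_le[OF cont r]) auto
  also have "\<dots> \<le> (b - a) * (2 * (C0 + 1))"
    using window by (intro mult_left_mono) auto
  also have "\<dots> \<le> 1/300"
    using short_window by (simp add: algebra_simps)
  finally show ?thesis .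
qed

lemma norm_lorentz_force_deriv_window_le:
  assumes r: "r \<in> {a..b}"
  shows "norm (lorentz_force_deriv c B DE DB r (X b x p r) (P b x p r) dy dP)
    \<le> 18 * C0 * norm dy + C0 * (2 * norm (dphat_sqrt c p dP))"
proof -
  have "r \<in> {0..T}"
    using r window_subset by auto
  then show ?thesis
    using norm_lorentz_force_deriv_le[OF c WE WB, of r "X b x p r" "P b x p r" dy dP]
      mult_left_mono[OF norm_dphat_le_twice_sqrt[OF c momentum_near_initial[OF r], of dP] C0_nonneg]
    by linarith
qed

lemma normalized_tangent_components:
  assumes s: "s \<in> {a..b}"
  shows "dphat_isqrt c p (fst (tangent k s)) =
      - integral {s..b} (\<lambda>r. dphat_isqrt c p (dphat c (P b x p r) (snd (tangent k r))))"
    and "dphat_sqrt c p (snd (tangent k s)) = dphat_sqrt c p k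
      + integral {s..b} (\<lambda>r. dphat_sqrt c p (lorentz_force_deriv c B DE DB r (X b x p r) (P b x p r)
          (fst (tangent k r)) (snd (tangent k r))))"
proof -
  have "continuous_on {a..b} (\<lambda>r. dphat c (P b x p r) (snd (tangent k r)))"
    using c momentum_continuous continuous_on_snd[OF tangent_continuous] by (intro continuous_on_dphat) auto
  moreover have "continuous_on {a..b} (\<lambda>r. lorentz_force_deriv c B DE DB r (X b x p r) (P b x p r)
      (fst (tangent k r)) (snd (tangent k r)))"
    using continuous_on_snd[OF linearized.continuous_field[OF tangent_continuous]]
    by (simp add: characteristic_field_deriv_def orbit_def)
  ultimately show "dphat_isqrt c p (fst (tangent k s)) =
      - integral {s..b} (\<lambda>r. dphat_isqrt c p (dphat c (P b x p r) (snd (tangent k r))))"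
    and "dphat_sqrt c p (snd (tangent k s)) = dphat_sqrt c p k
      + integral {s..b} (\<lambda>r. dphat_sqrt c p (lorentz_force_deriv c B DE DB r (X b x p r) (P b x p r)
          (fst (tangent k r)) (snd (tangent k r))))"
    using integral_linear[OF integrable_on_tail[OF _ s] bounded_linear_dphat_isqrt]
      integral_linear[OF integrable_on_tail[OF _ s] bounded_linear_dphat_sqrt]
      linear_neg[OF bounded_linear.linear[OF bounded_linear_dphat_isqrt]]
      linear_add[OF bounded_linear.linear[OF bounded_linear_dphat_sqrt]]
    by (simp_all add: tangent_components[OF s] o_def)
qed

lemma normalized_tangent:
  "norm (dphat_isqrt c p (fst (tangent (dphat_isqrt c p v) a)) + (b - a) *\<^sub>R v) \<le> (b - a) / 20 * norm v"
proof -
  have c0: "c > 0"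
    using c by simp
  define h where "h = dphat_isqrt c p v"
  define y where "y r = dphat_isqrt c p (fst (tangent h r))" for r
  define z where "z r = dphat_sqrt c p (snd (tangent h r))" for r
  define H where "H r w = dphat_isqrt c p (dphat c (P b x p r) (dphat_isqrt c p w))" for r w
  define G where "G r = dphat_sqrt c p (lorentz_force_deriv c B DE DB r (X b x p r) (P b x p r)
    (fst (tangent h r)) (snd (tangent h r)))" for r
  have H_z: "H r (z r) = dphat_isqrt c p (dphat c (P b x p r) (snd (tangent h r)))" for r
    by (simp add: H_def z_def dphat_isqrt_sqrt[OF c0])
  interpret near_identity_system a b "18 * (C0 + 1)" y z G H v
  proof
    show "a \<le> b" "b - a \<le> 1" "0 \<le> 18 * (C0 + 1)" "18 * (C0 + 1) * (b - a) \<le> 1/600"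
      using short_window C0_nonneg window mult_left_mono[of 1 "C0 + 1" "b - a"] by (simp_all add: algebra_simps)
    have "continuous_on {a..b} (\<lambda>r. lorentz_force_deriv c B DE DB r
        (X b x p r) (P b x p r) (fst (tangent h r)) (snd (tangent h r)))"
      using continuous_on_snd[OF linearized.continuous_field[OF tangent_continuous]]
      by (simp add: orbit_def characteristic_field_deriv_def)
    then show "continuous_on {a..b} z" "continuous_on {a..b} G"
      unfolding z_def G_def
      by (auto intro!: bounded_linear.continuous_on[OF bounded_linear_dphat_sqrt] continuous_on_snd
          tangent_continuous)
    show "continuous_on {a..b} (\<lambda>r. H r (z r))"
      unfolding H_z
      by (intro bounded_linear.continuous_on[OF bounded_linear_dphat_isqrt] continuous_on_dphat c0 continuous_on_snd
          tangent_continuous momentum_continuous)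
    show "y s = - integral {s..b} (\<lambda>r. H r (z r))" if "s \<in> {a..b}" for s
      using normalized_tangent_components(1)[OF that, of h] by (simp add: y_def H_z)
    show "z s = v + integral {s..b} G" if "s \<in> {a..b}" for s
      using normalized_tangent_components(2)[OF that, of h]
      by (simp add: z_def G_def[abs_def] h_def dphat_sqrt_isqrt[OF c0])
    show "norm (H r w - w) \<le> norm w / 50" if "r \<in> {a..b}" for r w
      unfolding H_def by (rule dphat_normalized_near_identity[OF c momentum_near_initial[OF that]])
    show "norm (G r) \<le> 18 * (C0 + 1) * (norm (y r) + norm (z r))" if r: "r \<in> {a..b}" for r
    proof -
      have "norm (fst (tangent h r)) \<le> norm (y r)"
        using norm_dphat_sqrt_le[OF c0, of p "y r"] by (simp add: y_def dphat_sqrt_isqrt[OF c0])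
      then have "norm (G r) \<le> 18 * C0 * norm (y r) + C0 * (2 * norm (z r))"
        using norm_dphat_sqrt_le[OF c0] norm_lorentz_force_deriv_window_le[OF r] C0_nonneg
        unfolding G_def z_def by (smt (verit) mult_left_mono)
      also have "\<dots> \<le> 18 * (C0 + 1) * (norm (y r) + norm (z r))"
        using C0_nonneg by (simp add: algebra_simps)
      finally show ?thesis .
    qed
  qed
  show ?thesis
    using norm_y_start_le by (simp add: y_def h_def)
qed

theorem flow_derivative_det_bounds:
  "\<exists>J. ((\<lambda>q. X b x q a) has_derivative J) (at p) \<and>
     c ^ 5 / (2 * pzero c p ^ 5) * \<bar>b - a\<bar> ^ 3 \<le> \<bar>det (matrix J)\<bar> \<and>
     \<bar>det (matrix J)\<bar> \<le> 2 * c ^ 5 / pzero c p ^ 5 * \<bar>b - a\<bar> ^ 3"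
proof -
  have "linear (\<lambda>k. fst (tangent k a))"
    by (rule has_derivative_linear[OF flow_has_derivative])
  moreover have "c > 0" "0 \<le> b - a" "\<bar>b - a\<bar> = b - a"
    using c window by auto
  ultimately show ?thesis
    using flow_has_derivative det_bounds_of_normalized_near_neg_scalar[OF _ _ _ normalized_tangent]
    by auto
qed

end

theorem lemma5p1:
  fixes T C0 :: real
  assumes "T > 0"
  shows "\<exists>Tbar C1 C2. 0 < Tbar \<and> Tbar \<le> T \<and> C1 > 0 \<and> C2 > 0 \<and>
    (\<forall>(c::real) E B DE DB X P.
       c \<ge> 1 \<longrightarrow> W1inf_field T C0 E DE \<longrightarrow> W1inf_field T C0 B DB \<longrightarrow>
       is_characteristic_flow c T E B X P \<longrightarrow>
       (\<forall>t \<tau> x p. 0 \<le> \<tau> \<and> \<tau> \<le> t \<and> t \<le> Tbar \<longrightarrow>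
          (\<exists>J. ((\<lambda>q. X t x q \<tau>) has_derivative J) (at p) \<and>
             C1 * (c ^ 5 / (2 * pzero c p ^ 5) * \<bar>t - \<tau>\<bar> ^ 3) \<le> \<bar>det (matrix J)\<bar> \<and>
             \<bar>det (matrix J)\<bar> \<le> C2 * (2 * c ^ 5 / pzero c p ^ 5 * \<bar>t - \<tau>\<bar> ^ 3))))"
proof -
  define K where "K = \<bar>C0\<bar> + 1"
  define Tbar where "Tbar = min T (1 / (20000 * K))"
  have K: "K > 0" "C0 + 1 \<le> K"
    by (auto simp: K_def add_pos_nonneg)
  have Tbar: "0 < Tbar" "Tbar \<le> T"
    using assms K by (auto simp: Tbar_def)
  have "Tbar * K \<le> 1 / (20000 * K) * K"
    using K by (intro mult_right_mono) (auto simp: Tbar_def)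
  then have short: "Tbar * K \<le> 1 / 20000"
    using K by simp
  show ?thesis
  proof (rule exI[of _ Tbar], rule exI[of _ 1], rule exI[of _ 1], intro conjI allI impI Tbar)
    fix c E B DE DB X P t \<tau> x p
    assume c: "(c::real) \<ge> 1" and WE: "W1inf_field T C0 E DE" and WB: "W1inf_field T C0 B DB"
      and flow: "is_characteristic_flow c T E B X P" and window: "0 \<le> \<tau> \<and> \<tau> \<le> t \<and> t \<le> Tbar"
    have "(t - \<tau>) * (C0 + 1) \<le> Tbar * K"
      using window K W1inf_field_nonneg[OF WE] assms by (intro mult_mono) auto
    then interpret characteristic_window c T C0 E B DE DB X P \<tau> t x p
      using c WE WB flow window Tbar short by unfold_locales auto
    show "\<exists>J. ((\<lambda>q. X t x q \<tau>) has_derivative J) (at p) \<and>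
        1 * (c ^ 5 / (2 * pzero c p ^ 5) * \<bar>t - \<tau>\<bar> ^ 3) \<le> \<bar>det (matrix J)\<bar> \<and>
        \<bar>det (matrix J)\<bar> \<le> 1 * (2 * c ^ 5 / pzero c p ^ 5 * \<bar>t - \<tau>\<bar> ^ 3)"
      using flow_derivative_det_bounds by (simp add: abs_minus_commute)
  qed simp_all
qed

end
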